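(* Let $n$ be a positive integer such that every component of $2n+1$ is greater than $34$. Let $G$ be any one of the groups $C_3\rtimes C_8=\langle a,b\mid a^8=b^3=1,\ ab^{-1}=ba\rangle$, $SL(2,3)$, or $\mathbb{Z}_3\times D_8$. Then there exists a $(48n+24,[34^n,4^{2n},2^{3n},24],24)$ partitioned difference family in $G\times\mathbb{F}_{2n+1}$.
   Context: The components of an integer $m$ are its maximal prime power factors, and $\mathbb{F}_m$ denotes the ring which is the direct product of the finite fields whose orders are the components of $m$; in $G\times\mathbb{F}_{2n+1}$ the second factor is taken with its additive group. For a finite group $\Gamma$ and $B\subseteq\Gamma$, $\Delta B$ is the multiset of differences $xy^{-1}$ (or $x-y$ additively) over ordered pairs of distinct $x,y\in B$; for $\mathcal{F}=\{B_1,\dots,B_t\}$, $\Delta\mathcal{F}$ is the multiset union of the $\Delta B_i$. A $(v,[k_1,\dots,k_t],\lambda)$ partitioned difference family in $\Gamma$ ($|\Gamma|=v$) is a partition of $\Gamma$ into blocks $B_i$ with $|B_i|=k_i$ such that $\Delta\mathcal{F}$ contains every non-identity element exactly $\lambda$ times. Exponents denote multiplicities of block sizes. $D_{8}=\langle x,y\mid x^4=1,\ y^2=1,\ yx^i=x^{-i}y\rangle$ is the dihedral group of order $8$; $SL(2,3)$ is the group of $2\times2$ matrices over $\mathbb{Z}_3$ of determinant $1$. *)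

theory Defs
  imports "HOL-Analysis.Analysis" "HOL-Library.Numeral_Type" "HOL-Algebra.Algebra"
    "HOL-Computational_Algebra.Primes"
begin

definition components :: "nat \<Rightarrow> nat set" where
  "components m = {p ^ multiplicity p m | p. p \<in> prime_factors m}"

text \<open>Additive group of the ring F_m = product of the finite fields whose orders are the
  components of m; the fields are given as a family Fld indexed by the components.\<close>
definition addF :: "nat \<Rightarrow> (nat \<Rightarrow> 'b ring) \<Rightarrow> (nat \<Rightarrow> 'b) monoid" where
  "addF m Fld = product_group (components m) (\<lambda>q. add_monoid (Fld q))"

definition is_field_family :: "nat \<Rightarrow> (nat \<Rightarrow> 'b ring) \<Rightarrow> bool" where
  "is_field_family m Fld \<longleftrightarrow> (\<forall>q \<in> components m.
     field (Fld q) \<and> finite (carrier (Fld q)) \<and> card (carrier (Fld q)) = q)"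

definition is_PDF :: "('a, 'm) monoid_scheme \<Rightarrow> nat \<Rightarrow> nat list \<Rightarrow> nat \<Rightarrow> 'a set list \<Rightarrow> bool" where
  "is_PDF Gam v ks lam Bs \<longleftrightarrow>
     card (carrier Gam) = v \<and>
     (\<forall>B \<in> set Bs. B \<subseteq> carrier Gam \<and> B \<noteq> {}) \<and>
     (\<forall>i < length Bs. \<forall>j < length Bs. i \<noteq> j \<longrightarrow> Bs ! i \<inter> Bs ! j = {}) \<and>
     \<Union> (set Bs) = carrier Gam \<and>
     mset (map card Bs) = mset ks \<and>
     (\<forall>g \<in> carrier Gam. g \<noteq> \<one>\<^bsub>Gam\<^esub> \<longrightarrow>
        sum_list (map (\<lambda>B. card {(x, y). x \<in> B \<and> y \<in> B \<and> x \<noteq> y \<and>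
                                   x \<otimes>\<^bsub>Gam\<^esub> inv\<^bsub>Gam\<^esub> y = g}) Bs) = lam)"

definition has_PDF :: "('a, 'm) monoid_scheme \<Rightarrow> nat \<Rightarrow> nat list \<Rightarrow> nat \<Rightarrow> bool" where
  "has_PDF Gam v ks lam \<longleftrightarrow> (\<exists>Bs. is_PDF Gam v ks lam Bs)"

text \<open>C3 \<rtimes> C8 = <a,b | a^8 = b^3 = 1, a b^-1 = b a>; the pair (i,j) stands for a^i b^j.
  Since a b a^-1 = b^-1, (a^i b^j)(a^k b^l) = a^(i+k) b^((-1)^k j + l).\<close>
definition C3_rtimes_C8 :: "(nat \<times> nat) monoid" where
  "C3_rtimes_C8 = \<lparr> carrier = {0..<8} \<times> {0..<3},
     mult = (\<lambda>(i, j) (k, l). ((i + k) mod 8, (if even k then j + l else 2 * j + l) mod 3)),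
     one = (0, 0) \<rparr>"

definition SL23 :: "(3 ^ 2 ^ 2) monoid" where
  "SL23 = \<lparr> carrier = {A. det A = 1}, mult = (\<lambda>A B. A ** B), one = mat 1 \<rparr>"

text \<open>D8 = <x,y | x^4 = 1, y^2 = 1, y x^i = x^-i y>; (i,j) stands for x^i y^j, so
  (x^i y^j)(x^k y^l) = x^(i + (-1)^j k) y^(j+l).\<close>
definition D8 :: "(nat \<times> nat) monoid" where
  "D8 = \<lparr> carrier = {0..<4} \<times> {0..<2},
     mult = (\<lambda>(i, j) (k, l). ((if even j then i + k else i + 3 * k) mod 4, (j + l) mod 2)),
     one = (0, 0) \<rparr>"

definition Z3_times_D8 :: "(int \<times> (nat \<times> nat)) monoid" where
  "Z3_times_D8 = integer_mod_group 3 \<times>\<times> D8"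

definition blocksizes :: "nat \<Rightarrow> nat list" where
  "blocksizes n = replicate n 34 @ replicate (2 * n) 4 @ replicate (3 * n) 2 @ [24]"

end

theory Submission
  imports Defs
begin

lemma (in group) inv_neq_self_of_odd_order:
  assumes "odd (order G)" "z \<in> carrier G" "z \<noteq> \<one>"
  shows "inv z \<noteq> z"
proof
  assume "inv z = z"
  then have "z [^] (2::nat) = \<one>"
    using assms(2) by (metis r_inv nat_pow_Suc nat_pow_0 l_one numeral_2_eq_2)
  then have dvd2: "ord z dvd 2" using assms(2) pow_eq_id by blast
  have "odd (ord z)" using ord_dvd_group_order[OF assms(2)] assms(1) dvd_trans by blast
  moreover have "ord z \<noteq> 0" "ord z \<le> 2"
    using dvd2 dvd_pos_nat[of 2 "ord z"] dvd_imp_le[of "ord z" 2] by auto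
  ultimately have "ord z = 1" by presburger
  then show False using ord_eq_1 assms(2,3) by blast
qed

definition inverse_transversal :: "('a, 'm) monoid_scheme \<Rightarrow> 'a set \<Rightarrow> bool" where
  "inverse_transversal G S \<longleftrightarrow> S \<subseteq> carrier G - {\<one>\<^bsub>G\<^esub>} \<and> (\<forall>z \<in> S. inv\<^bsub>G\<^esub> z \<notin> S) \<and>
     (\<forall>z \<in> carrier G - {\<one>\<^bsub>G\<^esub>}. z \<in> S \<or> inv\<^bsub>G\<^esub> z \<in> S)"

lemma (in group) exists_inverse_transversal:
  assumes "odd (order G)"
  shows "\<exists>S. inverse_transversal G S"
proof -
  define rep where "rep z = (SOME y. y \<in> {z, inv z})" for z
  have rep_in: "rep z = z \<or> rep z = inv z" for z
    using someI[of "\<lambda>y. y \<in> {z, inv z}" z] unfolding rep_def by blast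
  have rep_inv: "rep (inv z) = rep z" if "z \<in> carrier G" for z
    using that by (simp add: rep_def insert_commute)
  define S where "S = {z \<in> carrier G - {\<one>}. rep z = z}"
  have "S \<subseteq> carrier G - {\<one>}" unfolding S_def by blast
  moreover have "inv z \<notin> S" if z: "z \<in> S" for z
  proof
    assume "inv z \<in> S"
    then have "z = inv z" using z rep_inv[of z] unfolding S_def by simp
    then show False using inv_neq_self_of_odd_order[OF assms, of z] z unfolding S_def by simp
  qed
  moreover have "z \<in> S \<or> inv z \<in> S" if z: "z \<in> carrier G - {\<one>}" for z
    using rep_in[of z] rep_inv[of z] z unfolding S_def by auto
  ultimately show ?thesis unfolding inverse_transversal_def by blast
qed

lemma (in group) card_inverse_transversal:
  assumes "finite (carrier G)" "inverse_transversal G S"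
  shows "2 * card S + 1 = order G"
proof -
  have S: "S \<subseteq> carrier G - {\<one>}" and no_inv: "\<And>z. z \<in> S \<Longrightarrow> inv z \<notin> S"
    and cover: "\<And>z. z \<in> carrier G - {\<one>} \<Longrightarrow> z \<in> S \<or> inv z \<in> S"
    using assms(2) unfolding inverse_transversal_def by blast+
  have split: "carrier G - {\<one>} = S \<union> m_inv G ` S"
  proof
    show "carrier G - {\<one>} \<subseteq> S \<union> m_inv G ` S"
    proof
      fix z assume z: "z \<in> carrier G - {\<one>}"
      show "z \<in> S \<union> m_inv G ` S"
      proof (cases "z \<in> S")
        case False
        then have "inv z \<in> S" using cover[OF z] by blast
        moreover have "z = inv (inv z)" using z by simp
        ultimately show ?thesis by (metis UnI2 image_eqI)
      qed simp
    qed
    show "S \<union> m_inv G ` S \<subseteq> carrier G - {\<one>}"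
    proof (intro Un_least image_subsetI)
      fix z assume "z \<in> S"
      then show "inv z \<in> carrier G - {\<one>}" using S by auto
    qed (rule S)
  qed
  have "S \<inter> m_inv G ` S = {}"
    using no_inv by blast
  moreover have "card (m_inv G ` S) = card S"
    using S by (intro card_image inj_onI) (metis DiffD1 inv_inv subsetD)
  moreover have "finite S" using S assms(1) finite_subset by blast
  ultimately have "card (carrier G - {\<one>}) = 2 * card S"
    unfolding split by (simp add: card_Un_disjoint)
  moreover have "card (carrier G) > 0"
    using assms(1) one_closed card_gt_0_iff by blast
  then have "card (carrier G - {\<one>}) + 1 = card (carrier G)"
    using one_closed by (simp add: card_Diff_singleton)
  ultimately show ?thesis
    by (simp add: order_def)
qed

definition diff_count :: "('a, 'm) monoid_scheme \<Rightarrow> 'a set \<Rightarrow> 'a \<Rightarrow> nat" where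
  "diff_count Gam B g = card {(x, y). x \<in> B \<and> y \<in> B \<and> x \<noteq> y \<and> x \<otimes>\<^bsub>Gam\<^esub> inv\<^bsub>Gam\<^esub> y = g}"

lemmas is_PDF_diff_count_def = is_PDF_def[folded diff_count_def]

lemma (in group) diff_count_eq:
  assumes "B \<subseteq> carrier G" "g \<in> carrier G" "g \<noteq> \<one>"
  shows "diff_count G B g = card {y \<in> B. g \<otimes> y \<in> B}"
proof -
  have "{(x, y). x \<in> B \<and> y \<in> B \<and> x \<noteq> y \<and> x \<otimes> inv y = g} = (\<lambda>y. (g \<otimes> y, y)) ` {y \<in> B. g \<otimes> y \<in> B}"
  proof (intro Set.set_eqI iffI)
    fix p assume "p \<in> {(x, y). x \<in> B \<and> y \<in> B \<and> x \<noteq> y \<and> x \<otimes> inv y = g}"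
    then obtain x y where p: "p = (x, y)" "x \<in> B" "y \<in> B" "g = x \<otimes> inv y"
      by blast
    then have "x = g \<otimes> y"
      using assms inv_solve_right[of g x y] by blast
    then show "p \<in> (\<lambda>y. (g \<otimes> y, y)) ` {y \<in> B. g \<otimes> y \<in> B}"
      using p by blast
  next
    fix p assume "p \<in> (\<lambda>y. (g \<otimes> y, y)) ` {y \<in> B. g \<otimes> y \<in> B}"
    then obtain y where p: "p = (g \<otimes> y, y)" "y \<in> B" "g \<otimes> y \<in> B"
      by blast
    have "y \<in> carrier G" using p(2) assms(1) by blast
    then have "g \<otimes> y \<noteq> y" "g \<otimes> y \<otimes> inv y = g"
      using assms(2,3) by (simp_all add: m_assoc)
    then show "p \<in> {(x, y). x \<in> B \<and> y \<in> B \<and> x \<noteq> y \<and> x \<otimes> inv y = g}"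
      using p by blast
  qed
  then show ?thesis
    unfolding diff_count_def by (simp add: card_image inj_on_def)
qed

lemma (in group) sum_diff_count_fibres:
  assumes "finite (carrier G)" "distinct ks" "\<forall>q \<in> carrier G. \<kappa> q \<in> set ks"
    and "g \<in> carrier G" "g \<noteq> \<one>"
  shows "(\<Sum>k\<leftarrow>ks. diff_count G {q \<in> carrier G. \<kappa> q = k} g) = card {q \<in> carrier G. \<kappa> (g \<otimes> q) = \<kappa> q}"
proof -
  have "diff_count G {q \<in> carrier G. \<kappa> q = k} g = card {q \<in> carrier G. \<kappa> q = k \<and> \<kappa> (g \<otimes> q) = k}" for k
  proof -
    have "{y \<in> {q \<in> carrier G. \<kappa> q = k}. g \<otimes> y \<in> {q \<in> carrier G. \<kappa> q = k}}
        = {q \<in> carrier G. \<kappa> q = k \<and> \<kappa> (g \<otimes> q) = k}"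
      using assms(4) by auto
    then show ?thesis using diff_count_eq[of "{q \<in> carrier G. \<kappa> q = k}"] assms(4,5) by auto
  qed
  then have "(\<Sum>k\<leftarrow>ks. diff_count G {q \<in> carrier G. \<kappa> q = k} g)
      = (\<Sum>k \<in> set ks. card {q \<in> carrier G. \<kappa> q = k \<and> \<kappa> (g \<otimes> q) = k})"
    by (simp add: sum_list_distinct_conv_sum_set[OF assms(2)])
  also have "\<dots> = card (\<Union>k \<in> set ks. {q \<in> carrier G. \<kappa> q = k \<and> \<kappa> (g \<otimes> q) = k})"
    using assms(1) by (intro card_UN_disjoint[symmetric]) auto
  also have "(\<Union>k \<in> set ks. {q \<in> carrier G. \<kappa> q = k \<and> \<kappa> (g \<otimes> q) = k}) = {q \<in> carrier G. \<kappa> (g \<otimes> q) = \<kappa> q}"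
    using assms(3) by auto
  finally show ?thesis .
qed

lemma (in group) is_PDF_fibres:
  assumes "finite (carrier G)" "distinct ks" "\<forall>q \<in> carrier G. \<kappa> q \<in> set ks"
    and "\<forall>k \<in> set ks. \<exists>q \<in> carrier G. \<kappa> q = k"
    and "mset (map (\<lambda>k. card {q \<in> carrier G. \<kappa> q = k}) ks) = mset bs"
    and "\<forall>g \<in> carrier G. g \<noteq> \<one> \<longrightarrow> card {q \<in> carrier G. \<kappa> (g \<otimes> q) = \<kappa> q} = lam"
  shows "is_PDF G (order G) bs lam (map (\<lambda>k. {q \<in> carrier G. \<kappa> q = k}) ks)"
  unfolding is_PDF_diff_count_def
proof (intro conjI allI impI ballI)
  show "card (carrier G) = order G"
    by (simp add: order_def)
  show "\<Union> (set (map (\<lambda>k. {q \<in> carrier G. \<kappa> q = k}) ks)) = carrier G"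
    using assms(3) by auto
  show "mset (map card (map (\<lambda>k. {q \<in> carrier G. \<kappa> q = k}) ks)) = mset bs"
    using assms(5) by (simp add: comp_def)
  fix B assume B: "B \<in> set (map (\<lambda>k. {q \<in> carrier G. \<kappa> q = k}) ks)"
  then show "B \<subseteq> carrier G" by auto
  show "B \<noteq> {}" using B assms(4) by auto
next
  fix i j assume "i < length (map (\<lambda>k. {q \<in> carrier G. \<kappa> q = k}) ks)"
    "j < length (map (\<lambda>k. {q \<in> carrier G. \<kappa> q = k}) ks)" "i \<noteq> j"
  then show "map (\<lambda>k. {q \<in> carrier G. \<kappa> q = k}) ks ! i \<inter> map (\<lambda>k. {q \<in> carrier G. \<kappa> q = k}) ks ! j = {}"
    using assms(2) by (auto simp: nth_eq_iff_index_eq)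
next
  fix g assume "g \<in> carrier G" "g \<noteq> \<one>"
  then show "(\<Sum>B\<leftarrow>map (\<lambda>k. {q \<in> carrier G. \<kappa> q = k}) ks. diff_count G B g) = lam"
    using sum_diff_count_fibres[OF assms(1-3)] assms(6) by (simp add: comp_def)
qed

lemma card_fibre_inj_endo:
  assumes "finite M" "h ` M \<subseteq> M" "inj_on h M" "f \<in> M"
  shows "card {z \<in> M. h z = f} = 1"
proof -
  have "h ` M = M" using endo_inj_surj assms(1-3) by blast
  then obtain z where z: "z \<in> M" "h z = f" using assms(4) by (metis imageE)
  then have "{z \<in> M. h z = f} = {z}" using assms(3) by (auto simp: inj_on_def)
  then show ?thesis by simp
qed

lemma (in group) card_fibre_trivial_kernel:
  assumes "finite (carrier G)" "h \<in> hom G G" "\<And>z. z \<in> carrier G \<Longrightarrow> h z = \<one> \<Longrightarrow> z = \<one>"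
    and "f \<in> carrier G"
  shows "card {z \<in> carrier G. h z = f} = 1"
proof (rule card_fibre_inj_endo[OF assms(1) hom_carrier[OF assms(2)] _ assms(4)])
  interpret group_hom G G h by (unfold_locales) (fact assms(2))
  show "inj_on h (carrier G)"
    using assms(3) by (intro trivial_ker_imp_inj) (auto simp: kernel_def)
qed

locale pdf_lifting =
  G: group G + A: comm_group A
  for G :: "('a, 'm) monoid_scheme" and A :: "('c, 'n) monoid_scheme"
    and cls :: "'a \<Rightarrow> 'k" and mul :: "'a \<Rightarrow> 'c \<Rightarrow> 'c" and S :: "'c set" +
  assumes finite_G: "finite (carrier G)"
    and odd_order_A: "odd (order A)"
    and transversal_S: "inverse_transversal A S"
    and mul_hom: "a \<in> carrier G \<Longrightarrow> mul a \<in> hom A A"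
    and mul_inj: "a \<in> carrier G \<Longrightarrow> inj_on (mul a) (carrier A)"
    and mul_eq_imp_one: "\<lbrakk>a \<in> carrier G; a' \<in> carrier G; a \<noteq> a'; cls a = cls a'; z \<in> carrier A;
        mul a z = mul a' z\<rbrakk> \<Longrightarrow> z = \<one>\<^bsub>A\<^esub>"
    and mul_mult_eq_one_imp_one: "\<lbrakk>a \<in> carrier G; a' \<in> carrier G; cls a = cls a'; z \<in> carrier A;
        mul a z \<otimes>\<^bsub>A\<^esub> mul a' z = \<one>\<^bsub>A\<^esub>\<rbrakk> \<Longrightarrow> z = \<one>\<^bsub>A\<^esub>"
    and base_count: "\<lbrakk>g \<in> carrier G; g \<noteq> \<one>\<^bsub>G\<^esub>\<rbrakk> \<Longrightarrow>
        2 * card {a \<in> carrier G. cls (g \<otimes>\<^bsub>G\<^esub> a) = cls a} = order G"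
begin

lemma finite_A: "finite (carrier A)"
  using odd_order_A card.infinite unfolding order_def by fastforce

lemma mul_group_hom: "a \<in> carrier G \<Longrightarrow> group_hom A A (mul a)"
  by (intro group_hom.intro group_hom_axioms.intro A.is_group mul_hom)

lemma mul_closed: "a \<in> carrier G \<Longrightarrow> z \<in> carrier A \<Longrightarrow> mul a z \<in> carrier A"
  using hom_in_carrier[OF mul_hom] .

lemma mul_one: "a \<in> carrier G \<Longrightarrow> mul a \<one>\<^bsub>A\<^esub> = \<one>\<^bsub>A\<^esub>"
  using group_hom.hom_one[OF mul_group_hom] .

lemma mul_inv: "a \<in> carrier G \<Longrightarrow> z \<in> carrier A \<Longrightarrow> mul a (inv\<^bsub>A\<^esub> z) = inv\<^bsub>A\<^esub> (mul a z)"
  using group_hom.hom_inv[OF mul_group_hom] .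

lemma mul_eq_one_iff: "a \<in> carrier G \<Longrightarrow> z \<in> carrier A \<Longrightarrow> mul a z = \<one>\<^bsub>A\<^esub> \<longleftrightarrow> z = \<one>\<^bsub>A\<^esub>"
  using mul_inj mul_one by (metis A.one_closed inj_on_contraD)

lemma mul_surj: "a \<in> carrier G \<Longrightarrow> mul a ` carrier A = carrier A"
  using endo_inj_surj[OF finite_A _ mul_inj] hom_carrier[OF mul_hom] by blast

definition unmul :: "'a \<Rightarrow> 'c \<Rightarrow> 'c" where
  "unmul a = inv_into (carrier A) (mul a)"

lemma unmul_mul: "a \<in> carrier G \<Longrightarrow> z \<in> carrier A \<Longrightarrow> unmul a (mul a z) = z"
  unfolding unmul_def using mul_inj by (rule inv_into_f_f)

lemma obtain_mul:
  assumes "a \<in> carrier G" "y \<in> carrier A"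
  obtains z where "z \<in> carrier A" "y = mul a z"
  using mul_surj[OF assms(1)] assms(2) by blast

definition rep :: "'c \<Rightarrow> 'c" where
  "rep z = (if z \<in> S then z else inv\<^bsub>A\<^esub> z)"

lemma rep_eq_iff:
  assumes "z \<in> carrier A - {\<one>\<^bsub>A\<^esub>}" "w \<in> carrier A - {\<one>\<^bsub>A\<^esub>}"
  shows "rep z = rep w \<longleftrightarrow> z = w \<or> z = inv\<^bsub>A\<^esub> w"
proof -
  have no_inv: "\<And>x. x \<in> S \<Longrightarrow> inv\<^bsub>A\<^esub> x \<notin> S"
    using transversal_S unfolding inverse_transversal_def by blast
  have z: "z \<in> S \<or> inv\<^bsub>A\<^esub> z \<in> S" and w: "w \<in> S \<or> inv\<^bsub>A\<^esub> w \<in> S"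
    using transversal_S assms unfolding inverse_transversal_def by blast+
  have zc: "z \<in> carrier A" and wc: "w \<in> carrier A" using assms by blast+
  show ?thesis
  proof (cases "z \<in> S"; cases "w \<in> S")
    assume "z \<in> S" "w \<in> S"
    then show ?thesis using no_inv[of w] unfolding rep_def by auto
  next
    assume "z \<in> S" "w \<notin> S"
    then show ?thesis unfolding rep_def by auto
  next
    assume "z \<notin> S" "w \<in> S"
    then show ?thesis using zc wc unfolding rep_def by (auto simp: A.inv_equality A.r_inv)
  next
    assume "z \<notin> S" "w \<notin> S"
    then have "z \<noteq> inv\<^bsub>A\<^esub> w" using w by auto
    then show ?thesis using \<open>z \<notin> S\<close> \<open>w \<notin> S\<close> zc wc unfolding rep_def by (metis A.inv_inv)
  qed
qed

end

context pdf_lifting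
begin

lemma rep_in_S:
  assumes "z \<in> carrier A - {\<one>\<^bsub>A\<^esub>}"
  shows "rep z \<in> S"
proof -
  have "z \<in> S \<or> inv\<^bsub>A\<^esub> z \<in> S"
    using transversal_S assms unfolding inverse_transversal_def by blast
  then show ?thesis unfolding rep_def by auto
qed

lemma rep_inv: "z \<in> carrier A - {\<one>\<^bsub>A\<^esub>} \<Longrightarrow> rep (inv\<^bsub>A\<^esub> z) = rep z"
  using rep_eq_iff[of "inv\<^bsub>A\<^esub> z" z] by simp

definition label :: "'a \<times> 'c \<Rightarrow> ('k \<times> 'c) option" where
  "label q = (if snd q = \<one>\<^bsub>A\<^esub> then None else Some (cls (fst q), rep (unmul (fst q) (snd q))))"

lemma label_one [simp]: "label (a, \<one>\<^bsub>A\<^esub>) = None"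
  by (simp add: label_def)

lemma label_mul:
  "a \<in> carrier G \<Longrightarrow> z \<in> carrier A - {\<one>\<^bsub>A\<^esub>} \<Longrightarrow> label (a, mul a z) = Some (cls a, rep z)"
  by (simp add: label_def mul_eq_one_iff unmul_mul)

lemma label_mul_eq_iff:
  assumes "a \<in> carrier G" "a' \<in> carrier G" "z \<in> carrier A - {\<one>\<^bsub>A\<^esub>}" "z' \<in> carrier A - {\<one>\<^bsub>A\<^esub>}"
  shows "label (a', mul a' z') = label (a, mul a z) \<longleftrightarrow> cls a' = cls a \<and> (z' = z \<or> z' = inv\<^bsub>A\<^esub> z)"
  using assms by (simp add: label_mul rep_eq_iff)

lemma label_eq_None_iff: "label q = None \<longleftrightarrow> snd q = \<one>\<^bsub>A\<^esub>"
  by (simp add: label_def)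

lemma label_matches_trivial_shift:
  assumes a: "a \<in> carrier G" "a' \<in> carrier G" "a' \<noteq> a"
  shows "{y \<in> carrier A. label (a', y) = label (a, y)} = {\<one>\<^bsub>A\<^esub>}"
proof -
  have False if y: "y \<in> carrier A" "y \<noteq> \<one>\<^bsub>A\<^esub>" and eq: "label (a', y) = label (a, y)" for y
  proof -
    obtain z where z: "z \<in> carrier A" "y = mul a z" using obtain_mul a(1) y(1) by blast
    obtain z' where z': "z' \<in> carrier A" "y = mul a' z'" using obtain_mul a(2) y(1) by blast
    have nt: "z \<noteq> \<one>\<^bsub>A\<^esub>" "z' \<noteq> \<one>\<^bsub>A\<^esub>" using y z z' a mul_one by auto
    have "cls a' = cls a" and "z' = z \<or> z' = inv\<^bsub>A\<^esub> z"
      using eq label_mul_eq_iff[OF a(1,2), of z z'] z z' nt by auto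
    then show False
    proof (elim disjE)
      assume "z' = z"
      then show False using mul_eq_imp_one[OF a(1,2) _ _ z(1)] a(3) z z' nt \<open>cls a' = cls a\<close> by auto
    next
      assume "z' = inv\<^bsub>A\<^esub> z"
      then have "inv\<^bsub>A\<^esub> (mul a' z) = mul a z"
        using z z' a mul_inv by simp
      then have "mul a z \<otimes>\<^bsub>A\<^esub> mul a' z = \<one>\<^bsub>A\<^esub>"
        by (metis A.l_inv mul_closed a(2) z(1))
      then show False using mul_mult_eq_one_imp_one[OF a(1,2) _ z(1)] \<open>cls a' = cls a\<close> nt by auto
    qed
  qed
  then show ?thesis by auto
qed

end

lemma (in comm_group) inv_eq_mult_iff:
  assumes "x \<in> carrier G" "y \<in> carrier G" "f \<in> carrier G"
  shows "inv x = f \<otimes> y \<longleftrightarrow> y \<otimes> x = inv f"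
proof -
  have "inv x = f \<otimes> y \<longleftrightarrow> f \<otimes> y \<otimes> x = \<one>"
    using assms by (metis inv_equality l_inv m_closed)
  also have "\<dots> \<longleftrightarrow> y \<otimes> x = inv f"
    using assms by (metis inv_equality l_inv m_assoc m_closed inv_closed r_inv m_comm)
  finally show ?thesis .
qed

context pdf_lifting
begin

lemma label_shift_eq_iff:
  assumes a: "a \<in> carrier G" "a' \<in> carrier G" and f: "f \<in> carrier A" "f \<noteq> \<one>\<^bsub>A\<^esub>"
    and z: "z \<in> carrier A"
  shows "label (a', f \<otimes>\<^bsub>A\<^esub> mul a z) = label (a, mul a z) \<longleftrightarrow>
    cls a' = cls a \<and> (mul a' z = f \<otimes>\<^bsub>A\<^esub> mul a z \<or> mul a' (inv\<^bsub>A\<^esub> z) = f \<otimes>\<^bsub>A\<^esub> mul a z)"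
proof (cases "z = \<one>\<^bsub>A\<^esub>")
  case True
  then show ?thesis
    using a f mul_one by (auto simp: label_eq_None_iff)
next
  case z1: False
  have w: "f \<otimes>\<^bsub>A\<^esub> mul a z \<in> carrier A" using f z a mul_closed by blast
  then obtain z' where z': "z' \<in> carrier A" "f \<otimes>\<^bsub>A\<^esub> mul a z = mul a' z'"
    using obtain_mul a(2) by metis
  show ?thesis
  proof (cases "z' = \<one>\<^bsub>A\<^esub>")
    case True
    have "mul a' z \<noteq> \<one>\<^bsub>A\<^esub>" "mul a' (inv\<^bsub>A\<^esub> z) \<noteq> \<one>\<^bsub>A\<^esub>"
      using z z1 a(2) mul_eq_one_iff by simp_all
    moreover have "label (a, mul a z) \<noteq> None"
      using z z1 a(1) mul_eq_one_iff by (simp add: label_eq_None_iff)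
    ultimately show ?thesis
      using True z'(2) a mul_one by auto
  next
    case False
    have "mul a' z = mul a' z' \<longleftrightarrow> z' = z" "mul a' (inv\<^bsub>A\<^esub> z) = mul a' z' \<longleftrightarrow> z' = inv\<^bsub>A\<^esub> z"
      using mul_inj[OF a(2)] z z'(1) by (auto dest: inj_onD)
    then show ?thesis
      using label_mul_eq_iff[OF a, of z z'] z z1 z' False by auto
  qed
qed

lemma label_matches_shift:
  assumes a: "a \<in> carrier G" "a' \<in> carrier G" and f: "f \<in> carrier A" "f \<noteq> \<one>\<^bsub>A\<^esub>"
  shows "{y \<in> carrier A. label (a', f \<otimes>\<^bsub>A\<^esub> y) = label (a, y)} =
    (if cls a' = cls a
     then mul a ` ({z \<in> carrier A. mul a' z = f \<otimes>\<^bsub>A\<^esub> mul a z} \<union>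
                   {z \<in> carrier A. mul a' (inv\<^bsub>A\<^esub> z) = f \<otimes>\<^bsub>A\<^esub> mul a z})
     else {})"
proof (intro Set.set_eqI iffI)
  fix y assume y: "y \<in> {y \<in> carrier A. label (a', f \<otimes>\<^bsub>A\<^esub> y) = label (a, y)}"
  then obtain z where z: "z \<in> carrier A" "y = mul a z" using obtain_mul a(1) by blast
  then show "y \<in> (if cls a' = cls a then mul a ` ({z \<in> carrier A. mul a' z = f \<otimes>\<^bsub>A\<^esub> mul a z} \<union>
                   {z \<in> carrier A. mul a' (inv\<^bsub>A\<^esub> z) = f \<otimes>\<^bsub>A\<^esub> mul a z}) else {})"
    using y label_shift_eq_iff[OF a f z(1)] by auto
next
  fix y assume "y \<in> (if cls a' = cls a then mul a ` ({z \<in> carrier A. mul a' z = f \<otimes>\<^bsub>A\<^esub> mul a z} \<union>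
                   {z \<in> carrier A. mul a' (inv\<^bsub>A\<^esub> z) = f \<otimes>\<^bsub>A\<^esub> mul a z}) else {})"
  then obtain z where z: "z \<in> carrier A" "y = mul a z" "cls a' = cls a"
    "mul a' z = f \<otimes>\<^bsub>A\<^esub> mul a z \<or> mul a' (inv\<^bsub>A\<^esub> z) = f \<otimes>\<^bsub>A\<^esub> mul a z"
    by (auto split: if_splits)
  then show "y \<in> {y \<in> carrier A. label (a', f \<otimes>\<^bsub>A\<^esub> y) = label (a, y)}"
    using label_shift_eq_iff[OF a f z(1)] a(1) mul_closed by auto
qed

end

context pdf_lifting
begin

lemma inv_mul_hom: "a \<in> carrier G \<Longrightarrow> (\<lambda>z. inv\<^bsub>A\<^esub> (mul a z)) \<in> hom A A"
  by (intro homI) (simp_all add: mul_closed group_hom.hom_mult[OF mul_group_hom] A.inv_mult)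

lemma card_label_matches_shift:
  assumes a: "a \<in> carrier G" "a' \<in> carrier G" and f: "f \<in> carrier A" "f \<noteq> \<one>\<^bsub>A\<^esub>"
  shows "card {y \<in> carrier A. label (a', f \<otimes>\<^bsub>A\<^esub> y) = label (a, y)} =
    (if cls a' = cls a then if a' = a then 1 else 2 else 0)"
proof (cases "cls a' = cls a")
  case cls: True
  define Z1 where "Z1 = {z \<in> carrier A. mul a' z = f \<otimes>\<^bsub>A\<^esub> mul a z}"
  define Z2 where "Z2 = {z \<in> carrier A. mul a' (inv\<^bsub>A\<^esub> z) = f \<otimes>\<^bsub>A\<^esub> mul a z}"
  have one_notin: "\<one>\<^bsub>A\<^esub> \<notin> Z1" "\<one>\<^bsub>A\<^esub> \<notin> Z2"
    using a f mul_one unfolding Z1_def Z2_def by auto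
  have "Z1 \<inter> Z2 = {}"
  proof -
    have "z = \<one>\<^bsub>A\<^esub>" if "z \<in> Z1" "z \<in> Z2" for z
    proof -
      have "z \<in> carrier A" "mul a' z = mul a' (inv\<^bsub>A\<^esub> z)" using that unfolding Z1_def Z2_def by auto
      then have "inv\<^bsub>A\<^esub> z = z" using mul_inj[OF a(2)] by (auto dest: inj_onD)
      then show ?thesis
        using A.inv_neq_self_of_odd_order[OF odd_order_A] \<open>z \<in> carrier A\<close> by blast
    qed
    then show ?thesis using one_notin by blast
  qed
  moreover have "card Z1 = (if a' = a then 0 else 1)"
  proof (cases "a' = a")
    case True
    then have "Z1 = {}" using a f mul_closed unfolding Z1_def by auto
    then show ?thesis using True by simp
  next
    case False
    have "Z1 = {z \<in> carrier A. mul a' z \<otimes>\<^bsub>A\<^esub> inv\<^bsub>A\<^esub> (mul a z) = f}"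
      unfolding Z1_def using a f by (auto simp: A.inv_solve_right' mul_closed A.m_assoc)
    also have "card \<dots> = 1"
    proof (rule A.card_fibre_trivial_kernel[OF finite_A A.hom_group_mult[OF mul_hom inv_mul_hom] _ f(1)])
      fix z assume "z \<in> carrier A" "mul a' z \<otimes>\<^bsub>A\<^esub> inv\<^bsub>A\<^esub> (mul a z) = \<one>\<^bsub>A\<^esub>"
      then have "mul a' z = mul a z"
        using a A.inv_solve_right'[of "\<one>\<^bsub>A\<^esub>" "mul a' z" "mul a z"] mul_closed by simp
      then show "z = \<one>\<^bsub>A\<^esub>" using mul_eq_imp_one[OF a(2,1) False cls] \<open>z \<in> carrier A\<close> by blast
    qed (use a in simp_all)
    finally show ?thesis using False by simp
  qed
  moreover have "card Z2 = 1"
  proof -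
    have "Z2 = {z \<in> carrier A. mul a z \<otimes>\<^bsub>A\<^esub> mul a' z = inv\<^bsub>A\<^esub> f}"
      unfolding Z2_def using a f mul_closed by (auto simp: mul_inv A.inv_eq_mult_iff)
    also have "card \<dots> = 1"
    proof (rule A.card_fibre_trivial_kernel[OF finite_A A.hom_group_mult[OF mul_hom mul_hom]])
      fix z assume "z \<in> carrier A" "mul a z \<otimes>\<^bsub>A\<^esub> mul a' z = \<one>\<^bsub>A\<^esub>"
      then show "z = \<one>\<^bsub>A\<^esub>" using mul_mult_eq_one_imp_one[OF a cls[symmetric]] by blast
    qed (use a f in simp_all)
    finally show ?thesis .
  qed
  moreover have "finite Z1" "finite Z2" using finite_A unfolding Z1_def Z2_def by simp_all
  moreover have "inj_on (mul a) (Z1 \<union> Z2)"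
    using mul_inj[OF a(1)] by (rule inj_on_subset) (auto simp: Z1_def Z2_def)
  ultimately show ?thesis
    using label_matches_shift[OF a f] cls by (simp add: card_image card_Un_disjoint Z1_def Z2_def)
next
  case False
  then show ?thesis by (subst label_matches_shift[OF a f]) simp
qed

end

context pdf_lifting
begin

lemma card_label_matches:
  assumes g: "g \<in> carrier (G \<times>\<times> A)" "g \<noteq> \<one>\<^bsub>G \<times>\<times> A\<^esub>"
  shows "card {q \<in> carrier (G \<times>\<times> A). label (g \<otimes>\<^bsub>G \<times>\<times> A\<^esub> q) = label q} = order G"
proof -
  obtain g1 f where g1f: "g = (g1, f)" "g1 \<in> carrier G" "f \<in> carrier A"
    using g(1) by auto
  define Y where "Y a = {y \<in> carrier A. label (g1 \<otimes>\<^bsub>G\<^esub> a, f \<otimes>\<^bsub>A\<^esub> y) = label (a, y)}" for a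
  have "{q \<in> carrier (G \<times>\<times> A). label (g \<otimes>\<^bsub>G \<times>\<times> A\<^esub> q) = label q} = Sigma (carrier G) Y"
    unfolding Y_def g1f(1) by auto
  then have card_eq: "card {q \<in> carrier (G \<times>\<times> A). label (g \<otimes>\<^bsub>G \<times>\<times> A\<^esub> q) = label q} = (\<Sum>a \<in> carrier G. card (Y a))"
    using finite_G finite_A by (simp add: Y_def)
  show ?thesis
  proof (cases "f = \<one>\<^bsub>A\<^esub>")
    case True
    then have "g1 \<noteq> \<one>\<^bsub>G\<^esub>" using g(2) g1f(1) by simp
    have "Y a = {\<one>\<^bsub>A\<^esub>}" if "a \<in> carrier G" for a
    proof -
      have "Y a = {y \<in> carrier A. label (g1 \<otimes>\<^bsub>G\<^esub> a, y) = label (a, y)}"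
        unfolding Y_def True by auto
      then show ?thesis
        using label_matches_trivial_shift[of a "g1 \<otimes>\<^bsub>G\<^esub> a"] that g1f(2) \<open>g1 \<noteq> \<one>\<^bsub>G\<^esub>\<close> by simp
    qed
    then show ?thesis using card_eq by (simp add: order_def)
  next
    case False
    then have "card (Y a) = (if cls (g1 \<otimes>\<^bsub>G\<^esub> a) = cls a then if g1 = \<one>\<^bsub>G\<^esub> then 1 else 2 else 0)"
      if "a \<in> carrier G" for a
      using card_label_matches_shift[of a "g1 \<otimes>\<^bsub>G\<^esub> a" f] that g1f(2,3) unfolding Y_def by simp
    then have "(\<Sum>a \<in> carrier G. card (Y a))
        = (\<Sum>a \<in> carrier G. if cls (g1 \<otimes>\<^bsub>G\<^esub> a) = cls a then if g1 = \<one>\<^bsub>G\<^esub> then 1 else 2 else 0)"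
      by simp
    also have "\<dots> = order G"
    proof (cases "g1 = \<one>\<^bsub>G\<^esub>")
      case True
      then show ?thesis by (simp add: order_def)
    next
      case False
      then have "(\<Sum>a \<in> carrier G. if cls (g1 \<otimes>\<^bsub>G\<^esub> a) = cls a then if g1 = \<one>\<^bsub>G\<^esub> then 1 else 2 else 0)
          = 2 * card {a \<in> carrier G. cls (g1 \<otimes>\<^bsub>G\<^esub> a) = cls a}"
        using finite_G by (simp add: sum.If_cases Int_def)
      then show ?thesis using base_count[OF g1f(2) False] by simp
    qed
    finally show ?thesis using card_eq by simp
  qed
qed

lemma card_label_None: "card {q \<in> carrier (G \<times>\<times> A). label q = None} = order G"
proof -
  have "{q \<in> carrier (G \<times>\<times> A). label q = None} = carrier G \<times> {\<one>\<^bsub>A\<^esub>}"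
    by (auto simp: label_eq_None_iff)
  then show ?thesis by (simp add: order_def card_cartesian_product)
qed

lemma card_label_Some:
  assumes x: "x \<in> S"
  shows "card {q \<in> carrier (G \<times>\<times> A). label q = Some (c, x)} = 2 * card {a \<in> carrier G. cls a = c}"
proof -
  have xc: "x \<in> carrier A - {\<one>\<^bsub>A\<^esub>}" and inv_x: "inv\<^bsub>A\<^esub> x \<noteq> x"
    using transversal_S x A.inv_neq_self_of_odd_order[OF odd_order_A, of x]
    unfolding inverse_transversal_def by auto
  have rep_x: "rep x = x" using x unfolding rep_def by simp
  define C where "C = {a \<in> carrier G. cls a = c}"
  have "{q \<in> carrier (G \<times>\<times> A). label q = Some (c, x)} = (\<lambda>(a, z). (a, mul a z)) ` (C \<times> {x, inv\<^bsub>A\<^esub> x})"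
  proof (intro Set.set_eqI iffI)
    fix q assume q: "q \<in> {q \<in> carrier (G \<times>\<times> A). label q = Some (c, x)}"
    then obtain a y where ay: "q = (a, y)" "a \<in> carrier G" "y \<in> carrier A" by auto
    then obtain z where z: "z \<in> carrier A" "y = mul a z" using obtain_mul by blast
    have "z \<noteq> \<one>\<^bsub>A\<^esub>" using q ay z mul_one by (auto simp: label_eq_None_iff)
    then have "cls a = c" "rep z = rep x"
      using q ay z label_mul rep_x by auto
    then have "a \<in> C" "z \<in> {x, inv\<^bsub>A\<^esub> x}"
      using rep_eq_iff[OF _ xc, of z] z \<open>z \<noteq> \<one>\<^bsub>A\<^esub>\<close> ay(2) unfolding C_def by auto
    then show "q \<in> (\<lambda>(a, z). (a, mul a z)) ` (C \<times> {x, inv\<^bsub>A\<^esub> x})"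
      using ay z by auto
  next
    fix q assume "q \<in> (\<lambda>(a, z). (a, mul a z)) ` (C \<times> {x, inv\<^bsub>A\<^esub> x})"
    then obtain a z where q: "q = (a, mul a z)" "a \<in> C" "z \<in> {x, inv\<^bsub>A\<^esub> x}" by auto
    have "z \<in> carrier A - {\<one>\<^bsub>A\<^esub>}" "rep z = x"
      using q(3) xc rep_x rep_inv by auto
    then show "q \<in> {q \<in> carrier (G \<times>\<times> A). label q = Some (c, x)}"
      using q label_mul mul_closed unfolding C_def by auto
  qed
  moreover have "inj_on (\<lambda>(a, z). (a, mul a z)) (C \<times> {x, inv\<^bsub>A\<^esub> x})"
    using mul_inj xc unfolding C_def by (auto simp: inj_on_def)
  moreover have "card (C \<times> {x, inv\<^bsub>A\<^esub> x}) = 2 * card C"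
    using inv_x by (simp add: card_cartesian_product)
  ultimately show ?thesis by (simp add: card_image C_def)
qed

lemma label_cases:
  assumes "q \<in> carrier (G \<times>\<times> A)"
  shows "label q = None \<or> (\<exists>x \<in> S. label q = Some (cls (fst q), x))"
proof -
  obtain a y where ay: "q = (a, y)" "a \<in> carrier G" "y \<in> carrier A" using assms by auto
  then obtain z where z: "z \<in> carrier A" "y = mul a z" using obtain_mul by blast
  show ?thesis
  proof (cases "z = \<one>\<^bsub>A\<^esub>")
    case False
    then show ?thesis using label_mul[OF ay(2), of z] rep_in_S[of z] ay z by auto
  qed (simp add: ay z mul_one ay(2))
qed

theorem has_PDF_lifted:
  assumes "distinct cs" "set cs = cls ` carrier G"
  shows "has_PDF (G \<times>\<times> A) (order G * order A)
    (order G # concat (map (\<lambda>c. replicate (card S) (2 * card {a \<in> carrier G. cls a = c})) cs)) (order G)"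
proof -
  interpret GA: group "G \<times>\<times> A" by (intro DirProd_group G.is_group A.is_group)
  have "finite S" using transversal_S finite_A finite_subset unfolding inverse_transversal_def by blast
  then obtain xs where xs: "set xs = S" "distinct xs" using finite_distinct_list by blast
  define ks where "ks = None # map Some (List.product cs xs)"
  have "is_PDF (G \<times>\<times> A) (order (G \<times>\<times> A))
    (order G # concat (map (\<lambda>c. replicate (card S) (2 * card {a \<in> carrier G. cls a = c})) cs)) (order G)
    (map (\<lambda>k. {q \<in> carrier (G \<times>\<times> A). label q = k}) ks)"
  proof (rule GA.is_PDF_fibres)
    show "finite (carrier (G \<times>\<times> A))" using finite_G finite_A by simp
    show "distinct ks"
      unfolding ks_def using assms(1) xs(2) by (simp add: distinct_map distinct_product)
    show "\<forall>q \<in> carrier (G \<times>\<times> A). label q \<in> set ks"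
      using label_cases assms(2) xs(1) unfolding ks_def by fastforce
    show "\<forall>k \<in> set ks. \<exists>q \<in> carrier (G \<times>\<times> A). label q = k"
    proof
      fix k assume "k \<in> set ks"
      then consider "k = None" | a x where "k = Some (cls a, x)" "a \<in> carrier G" "x \<in> S"
        using assms(2) xs(1) unfolding ks_def by auto
      then show "\<exists>q \<in> carrier (G \<times>\<times> A). label q = k"
      proof cases
        case 1
        then show ?thesis by (intro bexI[of _ "(\<one>\<^bsub>G\<^esub>, \<one>\<^bsub>A\<^esub>)"]) simp_all
      next
        case 2
        then have "x \<in> carrier A - {\<one>\<^bsub>A\<^esub>}" "rep x = x"
          using transversal_S unfolding inverse_transversal_def rep_def by auto
        then show ?thesis
          using 2 label_mul mul_closed by (intro bexI[of _ "(a, mul a x)"]) auto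
      qed
    qed
    have "map (\<lambda>x. card {q \<in> carrier (G \<times>\<times> A). label q = Some (c, x)}) xs
        = replicate (card S) (2 * card {a \<in> carrier G. cls a = c})" for c
    proof -
      have "map (\<lambda>x. card {q \<in> carrier (G \<times>\<times> A). label q = Some (c, x)}) xs
          = map (\<lambda>_. 2 * card {a \<in> carrier G. cls a = c}) xs"
        using xs(1) card_label_Some by (intro map_cong) auto
      then show ?thesis using distinct_card[OF xs(2)] xs(1) by (simp add: map_replicate_const)
    qed
    then have "map (\<lambda>k. card {q \<in> carrier (G \<times>\<times> A). label q = k}) ks
        = order G # concat (map (\<lambda>c. replicate (card S) (2 * card {a \<in> carrier G. cls a = c})) cs)"
      using card_label_None by (simp add: ks_def product_concat_map map_concat comp_def)
    then show "mset (map (\<lambda>k. card {q \<in> carrier (G \<times>\<times> A). label q = k}) ks)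
        = mset (order G # concat (map (\<lambda>c. replicate (card S) (2 * card {a \<in> carrier G. cls a = c})) cs))"
      by (rule arg_cong)
    show "\<forall>g \<in> carrier (G \<times>\<times> A). g \<noteq> \<one>\<^bsub>G \<times>\<times> A\<^esub> \<longrightarrow>
        card {q \<in> carrier (G \<times>\<times> A). label (g \<otimes>\<^bsub>G \<times>\<times> A\<^esub> q) = label q} = order G"
      using card_label_matches by blast
  qed
  moreover have "order (G \<times>\<times> A) = order G * order A"
    by (simp add: order_def card_cartesian_product)
  ultimately show ?thesis unfolding has_PDF_def by auto
qed

end

lemma has_PDF_mset_cong:
  assumes "has_PDF Gam v ks lam" "mset ks = mset ks'"
  shows "has_PDF Gam v ks' lam"
proof -
  obtain Bs where "is_PDF Gam v ks lam Bs" using assms(1) unfolding has_PDF_def by blast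
  then have "is_PDF Gam v ks' lam Bs" using assms(2) unfolding is_PDF_def by simp
  then show ?thesis unfolding has_PDF_def by blast
qed

lemma mset_concat_map_cong:
  assumes "mset xs = mset ys"
  shows "mset (concat (map f xs)) = mset (concat (map f ys))"
proof -
  have "mset (concat (map f zs)) = sum_mset (image_mset (\<lambda>x. mset (f x)) (mset zs))" for zs
    by (induction zs) auto
  then show ?thesis using assms by simp
qed

lemma map_upt_nth: "map (\<lambda>i. f (xs ! i)) [0..<length xs] = map f xs"
  by (rule nth_equalityI) simp_all

lemma ex_block_index:
  assumes "\<forall>i < length Ds. \<forall>j < length Ds. i \<noteq> j \<longrightarrow> Ds ! i \<inter> Ds ! j = {}"
  shows "\<exists>idx. \<forall>i < length Ds. \<forall>a \<in> Ds ! i. idx a = i"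
proof (intro exI allI impI ballI)
  fix i a assume i: "i < length Ds" and a: "a \<in> Ds ! i"
  show "(LEAST j. j < length Ds \<and> a \<in> Ds ! j) = i"
  proof (rule Least_equality)
    fix j assume j: "j < length Ds \<and> a \<in> Ds ! j"
    then have "j = i" using assms i a by blast
    then show "i \<le> j" by simp
  qed (use i a in simp)
qed

theorem has_PDF_lift:
  fixes G :: "('a, 'm) monoid_scheme" and A :: "('c, 'n) monoid_scheme" and mul :: "'a \<Rightarrow> 'c \<Rightarrow> 'c"
  assumes "group G" "finite (carrier G)" "comm_group A" "odd (order A)"
    and base: "is_PDF G v ks lam Ds" "2 * lam = v"
    and mul_hom: "\<And>a. a \<in> carrier G \<Longrightarrow> mul a \<in> hom A A"
    and mul_inj: "\<And>a. a \<in> carrier G \<Longrightarrow> inj_on (mul a) (carrier A)"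
    and mul_eq: "\<And>D a a' z. \<lbrakk>D \<in> set Ds; a \<in> D; a' \<in> D; a \<noteq> a'; z \<in> carrier A; mul a z = mul a' z\<rbrakk>
      \<Longrightarrow> z = \<one>\<^bsub>A\<^esub>"
    and mul_mult: "\<And>D a a' z. \<lbrakk>D \<in> set Ds; a \<in> D; a' \<in> D; z \<in> carrier A;
      mul a z \<otimes>\<^bsub>A\<^esub> mul a' z = \<one>\<^bsub>A\<^esub>\<rbrakk> \<Longrightarrow> z = \<one>\<^bsub>A\<^esub>"
  shows "has_PDF (G \<times>\<times> A) (v * order A) (v # concat (map (\<lambda>k. replicate (order A div 2) (2 * k)) ks)) v"
proof -
  interpret G: group G by fact
  interpret A: comm_group A by fact
  have v: "order G = v" and blocks: "\<forall>D \<in> set Ds. D \<subseteq> carrier G \<and> D \<noteq> {}"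
    and disj: "\<forall>i < length Ds. \<forall>j < length Ds. i \<noteq> j \<longrightarrow> Ds ! i \<inter> Ds ! j = {}"
    and cover: "\<Union> (set Ds) = carrier G" and sizes: "mset (map card Ds) = mset ks"
    and diffs: "\<forall>g \<in> carrier G. g \<noteq> \<one>\<^bsub>G\<^esub> \<longrightarrow> (\<Sum>B\<leftarrow>Ds. diff_count G B g) = lam"
    using base(1) unfolding is_PDF_diff_count_def order_def by auto
  obtain cls where cls: "\<And>i a. i < length Ds \<Longrightarrow> a \<in> Ds ! i \<Longrightarrow> cls a = i"
    using ex_block_index[OF disj] by blast
  have cls_block: "cls a < length Ds \<and> a \<in> Ds ! cls a" if "a \<in> carrier G" for a
  proof -
    have "a \<in> \<Union> (set Ds)" using that cover by simp
    then obtain D where D: "D \<in> set Ds" "a \<in> D" by blast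
    then obtain i where i: "i < length Ds" "Ds ! i = D" by (auto simp: in_set_conv_nth)
    then show ?thesis using cls[OF i(1)] D(2) by simp
  qed
  have block_carrier: "Ds ! i \<subseteq> carrier G" "Ds ! i \<noteq> {}" if "i < length Ds" for i
    using blocks nth_mem[OF that] by blast+
  have fibre: "{a \<in> carrier G. cls a = i} = Ds ! i" if i: "i < length Ds" for i
  proof
    show "{a \<in> carrier G. cls a = i} \<subseteq> Ds ! i" using cls_block by blast
    show "Ds ! i \<subseteq> {a \<in> carrier G. cls a = i}" using block_carrier[OF i] cls[OF i] by blast
  qed
  obtain S where S: "inverse_transversal A S"
    using A.exists_inverse_transversal[OF assms(4)] by blast
  interpret pdf_lifting G A cls mul S
  proof
    show "finite (carrier G)" "odd (order A)" "inverse_transversal A S" by fact+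
    show "mul a \<in> hom A A" "inj_on (mul a) (carrier A)" if "a \<in> carrier G" for a
      using that mul_hom mul_inj by blast+
    show "z = \<one>\<^bsub>A\<^esub>" if "a \<in> carrier G" "a' \<in> carrier G" "a \<noteq> a'" "cls a = cls a'"
      "z \<in> carrier A" "mul a z = mul a' z" for a a' z
    proof -
      from cls_block[OF that(1)] have i: "cls a < length Ds" "a \<in> Ds ! cls a" by blast+
      from cls_block[OF that(2)] that(4) have "a' \<in> Ds ! cls a" by simp
      then show ?thesis using mul_eq[OF nth_mem[OF i(1)] i(2) _ that(3,5,6)] by blast
    qed
    show "z = \<one>\<^bsub>A\<^esub>" if "a \<in> carrier G" "a' \<in> carrier G" "cls a = cls a'"
      "z \<in> carrier A" "mul a z \<otimes>\<^bsub>A\<^esub> mul a' z = \<one>\<^bsub>A\<^esub>" for a a' z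
    proof -
      from cls_block[OF that(1)] have i: "cls a < length Ds" "a \<in> Ds ! cls a" by blast+
      from cls_block[OF that(2)] that(3) have "a' \<in> Ds ! cls a" by simp
      then show ?thesis using mul_mult[OF nth_mem[OF i(1)] i(2) _ that(4,5)] by blast
    qed
    show "2 * card {a \<in> carrier G. cls (g \<otimes>\<^bsub>G\<^esub> a) = cls a} = order G"
      if "g \<in> carrier G" "g \<noteq> \<one>\<^bsub>G\<^esub>" for g
    proof -
      have "card {a \<in> carrier G. cls (g \<otimes>\<^bsub>G\<^esub> a) = cls a}
          = (\<Sum>i\<leftarrow>[0..<length Ds]. diff_count G {a \<in> carrier G. cls a = i} g)"
        using G.sum_diff_count_fibres[OF assms(2) distinct_upt _ that] cls_block by simp
      also have "\<dots> = (\<Sum>i\<leftarrow>[0..<length Ds]. diff_count G (Ds ! i) g)"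
        by (rule arg_cong[where f = sum_list], rule map_cong) (simp_all add: fibre)
      also have "\<dots> = (\<Sum>B\<leftarrow>Ds. diff_count G B g)"
        using map_upt_nth[of "\<lambda>B. diff_count G B g" Ds] by simp
      finally show ?thesis using diffs that base(2) v by simp
    qed
  qed
  have "set [0..<length Ds] = cls ` carrier G"
  proof
    show "set [0..<length Ds] \<subseteq> cls ` carrier G"
    proof
      fix i assume "i \<in> set [0..<length Ds]"
      then have i: "i < length Ds" by simp
      then obtain a where "a \<in> Ds ! i" using block_carrier by blast
      then show "i \<in> cls ` carrier G" using cls[OF i] block_carrier(1)[OF i] by blast
    qed
    show "cls ` carrier G \<subseteq> set [0..<length Ds]" using cls_block by auto
  qed
  then have "has_PDF (G \<times>\<times> A) (order G * order A)
      (order G # concat (map (\<lambda>i. replicate (card S) (2 * card {a \<in> carrier G. cls a = i})) [0..<length Ds]))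
      (order G)"
    by (intro has_PDF_lifted) simp_all
  moreover have "card S = order A div 2"
    using A.card_inverse_transversal[OF finite_A S] by simp
  moreover have "map (\<lambda>i. replicate n (2 * card {a \<in> carrier G. cls a = i})) [0..<length Ds]
      = map (\<lambda>k. replicate n (2 * k)) (map card Ds)" for n
  proof -
    have "map (\<lambda>i. replicate n (2 * card {a \<in> carrier G. cls a = i})) [0..<length Ds]
        = map (\<lambda>i. replicate n (2 * card (Ds ! i))) [0..<length Ds]"
      using fibre by (intro map_cong) auto
    then show ?thesis using map_upt_nth[of "\<lambda>D. replicate n (2 * card D)" Ds] by simp
  qed
  ultimately have "has_PDF (G \<times>\<times> A) (v * order A)
      (v # concat (map (\<lambda>k. replicate (order A div 2) (2 * k)) (map card Ds))) v"
    using v by (simp only:)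
  then show ?thesis
    by (rule has_PDF_mset_cong)
      (use mset_concat_map_cong[OF sizes, of "\<lambda>k. replicate (order A div 2) (2 * k)"] in simp)
qed

lemma comm_group_product_add_monoid:
  assumes "\<And>i. i \<in> I \<Longrightarrow> ring (R i)"
  shows "comm_group (product_group I (\<lambda>i. add_monoid (R i)))"
proof (rule group.group_comm_groupI)
  show "group (product_group I (\<lambda>i. add_monoid (R i)))"
    using assms by (simp add: abelian_group.a_group ring.is_abelian_group)
  fix x y assume "x \<in> carrier (product_group I (\<lambda>i. add_monoid (R i)))"
    "y \<in> carrier (product_group I (\<lambda>i. add_monoid (R i)))"
  then show "x \<otimes>\<^bsub>product_group I (\<lambda>i. add_monoid (R i))\<^esub> y = y \<otimes>\<^bsub>product_group I (\<lambda>i. add_monoid (R i))\<^esub> x"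
    using assms by (auto simp: PiE_iff ring.ring_simprules(10) intro!: restrict_ext)
qed

lemma product_add_monoid_eq_one:
  assumes "z \<in> carrier (product_group I (\<lambda>i. add_monoid (R i)))" "\<And>i. i \<in> I \<Longrightarrow> z i = \<zero>\<^bsub>R i\<^esub>"
  shows "z = \<one>\<^bsub>product_group I (\<lambda>i. add_monoid (R i))\<^esub>"
  using assms by (auto simp: PiE_iff restrict_def fun_eq_iff extensional_def)

context
  fixes I :: "'i set" and R :: "'i \<Rightarrow> ('r, 's) ring_scheme"
    and u u' :: "'i \<Rightarrow> 'r"
  assumes domain: "\<And>i. i \<in> I \<Longrightarrow> domain (R i)"
    and u: "\<And>i. i \<in> I \<Longrightarrow> u i \<in> carrier (R i)"
    and u': "\<And>i. i \<in> I \<Longrightarrow> u' i \<in> carrier (R i)"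
begin

private abbreviation (input) P where "P \<equiv> product_group I (\<lambda>i. add_monoid (R i))"

lemma scale_hom: "(\<lambda>z. \<lambda>i\<in>I. u i \<otimes>\<^bsub>R i\<^esub> z i) \<in> hom P P"
proof (rule homI)
  fix z assume z: "z \<in> carrier P"
  have "u i \<otimes>\<^bsub>R i\<^esub> z i \<in> carrier (R i)" if i: "i \<in> I" for i
  proof -
    interpret domain "R i" by (rule domain[OF i])
    show ?thesis using u[OF i] z i by (auto simp: PiE_iff)
  qed
  then show "(\<lambda>i\<in>I. u i \<otimes>\<^bsub>R i\<^esub> z i) \<in> carrier P" by simp
next
  fix x y assume x: "x \<in> carrier P" and y: "y \<in> carrier P"
  have "u i \<otimes>\<^bsub>R i\<^esub> (x i \<oplus>\<^bsub>R i\<^esub> y i) = u i \<otimes>\<^bsub>R i\<^esub> x i \<oplus>\<^bsub>R i\<^esub> u i \<otimes>\<^bsub>R i\<^esub> y i"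
    if i: "i \<in> I" for i
  proof -
    interpret domain "R i" by (rule domain[OF i])
    show ?thesis using u[OF i] x y i by (auto simp: PiE_iff r_distr)
  qed
  then show "(\<lambda>i\<in>I. u i \<otimes>\<^bsub>R i\<^esub> (x \<otimes>\<^bsub>P\<^esub> y) i) = (\<lambda>i\<in>I. u i \<otimes>\<^bsub>R i\<^esub> x i) \<otimes>\<^bsub>P\<^esub> (\<lambda>i\<in>I. u i \<otimes>\<^bsub>R i\<^esub> y i)"
    by (auto intro!: restrict_ext)
qed

lemma scale_inj:
  assumes "\<And>i. i \<in> I \<Longrightarrow> u i \<noteq> \<zero>\<^bsub>R i\<^esub>"
  shows "inj_on (\<lambda>z. \<lambda>i\<in>I. u i \<otimes>\<^bsub>R i\<^esub> z i) (carrier P)"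
proof (rule inj_onI)
  fix x y assume x: "x \<in> carrier P" and y: "y \<in> carrier P"
    and eq: "(\<lambda>i\<in>I. u i \<otimes>\<^bsub>R i\<^esub> x i) = (\<lambda>i\<in>I. u i \<otimes>\<^bsub>R i\<^esub> y i)"
  have "x i = y i" if i: "i \<in> I" for i
  proof -
    interpret domain "R i" by (rule domain[OF i])
    have "u i \<otimes>\<^bsub>R i\<^esub> x i = u i \<otimes>\<^bsub>R i\<^esub> y i" using fun_cong[OF eq, of i] i by simp
    then show ?thesis using m_lcancel[OF assms[OF i] u[OF i]] x y i by (auto simp: PiE_iff)
  qed
  then show "x = y"
    using PiE_ext[OF x[unfolded carrier_product_group] y[unfolded carrier_product_group]] by blast
qed

lemma scale_eq_imp_one:
  assumes "\<And>i. i \<in> I \<Longrightarrow> u i \<noteq> u' i" "z \<in> carrier P"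
    and eq: "(\<lambda>i\<in>I. u i \<otimes>\<^bsub>R i\<^esub> z i) = (\<lambda>i\<in>I. u' i \<otimes>\<^bsub>R i\<^esub> z i)"
  shows "z = \<one>\<^bsub>P\<^esub>"
proof (rule product_add_monoid_eq_one[OF assms(2)])
  fix i assume i: "i \<in> I"
  interpret domain "R i" by (rule domain[OF i])
  have "u i \<otimes>\<^bsub>R i\<^esub> z i = u' i \<otimes>\<^bsub>R i\<^esub> z i" using fun_cong[OF eq, of i] i by simp
  then show "z i = \<zero>\<^bsub>R i\<^esub>"
    using m_rcancel[of "z i" "u i" "u' i"] u[OF i] u'[OF i] assms(1,2) i by (auto simp: PiE_iff)
qed

lemma scale_mult_eq_one_imp_one:
  assumes "\<And>i. i \<in> I \<Longrightarrow> u i \<oplus>\<^bsub>R i\<^esub> u' i \<noteq> \<zero>\<^bsub>R i\<^esub>" "z \<in> carrier P"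
    and eq: "(\<lambda>i\<in>I. u i \<otimes>\<^bsub>R i\<^esub> z i) \<otimes>\<^bsub>P\<^esub> (\<lambda>i\<in>I. u' i \<otimes>\<^bsub>R i\<^esub> z i) = \<one>\<^bsub>P\<^esub>"
  shows "z = \<one>\<^bsub>P\<^esub>"
proof (rule product_add_monoid_eq_one[OF assms(2)])
  fix i assume i: "i \<in> I"
  interpret domain "R i" by (rule domain[OF i])
  have zi: "z i \<in> carrier (R i)" using assms(2) i by (auto simp: PiE_iff)
  have "u i \<otimes>\<^bsub>R i\<^esub> z i \<oplus>\<^bsub>R i\<^esub> u' i \<otimes>\<^bsub>R i\<^esub> z i = \<zero>\<^bsub>R i\<^esub>"
    using fun_cong[OF eq, of i] i by simp
  then have "(u i \<oplus>\<^bsub>R i\<^esub> u' i) \<otimes>\<^bsub>R i\<^esub> z i = \<zero>\<^bsub>R i\<^esub>"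
    using u[OF i] u'[OF i] zi by (simp add: l_distr)
  then show "z i = \<zero>\<^bsub>R i\<^esub>"
    using integral[of "u i \<oplus>\<^bsub>R i\<^esub> u' i" "z i"] assms(1)[OF i] u[OF i] u'[OF i] zi by auto
qed

end

lemma finite_components: "finite (components m)"
  unfolding components_def
  by (metis (mono_tags) finite_imageI finite_set_mset image_def Setcompr_eq_image)

lemma components_dvd: "q \<in> components m \<Longrightarrow> q dvd m"
  unfolding components_def using multiplicity_dvd by auto

lemma prod_components:
  assumes "m \<noteq> 0"
  shows "(\<Prod>q \<in> components m. q) = m"
proof -
  have components: "components m = (\<lambda>p. p ^ multiplicity p m) ` prime_factors m"
    unfolding components_def by auto
  have "inj_on (\<lambda>p. p ^ multiplicity p m) (prime_factors m)"
  proof (rule inj_onI)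
    fix p p' assume p: "p \<in> prime_factors m" and p': "p' \<in> prime_factors m"
      and eq: "p ^ multiplicity p m = p' ^ multiplicity p' m"
    have "normalization_semidom_class.prime p" "normalization_semidom_class.prime p'" "multiplicity p m > 0"
      using p p' prime_factors_multiplicity by auto
    then have "p dvd p' ^ multiplicity p' m"
      using eq by (metis dvd_power)
    then show "p = p'"
      using prime_dvd_power primes_dvd_imp_eq \<open>normalization_semidom_class.prime p\<close>
        \<open>normalization_semidom_class.prime p'\<close> by blast
  qed
  then have "(\<Prod>q \<in> components m. q) = (\<Prod>p \<in> prime_factors m. p ^ multiplicity p m)"
    unfolding components by (simp add: prod.reindex)
  also have "\<dots> = m" using prod_prime_factors[OF assms] by simp
  finally show ?thesis .
qed

lemma comm_group_addF: "is_field_family m Fld \<Longrightarrow> comm_group (addF m Fld)"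
  unfolding addF_def is_field_family_def
  by (intro comm_group_product_add_monoid) (simp add: field.is_ring)

lemma order_addF:
  assumes "m \<noteq> 0" "is_field_family m Fld"
  shows "order (addF m Fld) = m"
proof -
  have "order (addF m Fld) = (\<Prod>q \<in> components m. card (carrier (Fld q)))"
    unfolding order_def addF_def using finite_components by (simp add: card_PiE)
  also have "\<dots> = m"
    using assms(2) prod_components[OF assms(1)] unfolding is_field_family_def by simp
  finally show ?thesis .
qed

lemma ex_inj_on_blocks:
  assumes "\<forall>i < length Ds. \<forall>j < length Ds. i \<noteq> j \<longrightarrow> Ds ! i \<inter> Ds ! j = {}" "finite T"
    and "\<And>D. D \<in> set Ds \<Longrightarrow> finite D \<and> card D \<le> card T"
  shows "\<exists>u. \<forall>D \<in> set Ds. inj_on u D \<and> u ` D \<subseteq> T"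
proof -
  obtain idx where idx: "\<And>i a. i < length Ds \<Longrightarrow> a \<in> Ds ! i \<Longrightarrow> idx a = i"
    using ex_block_index[OF assms(1)] by blast
  have "\<forall>i < length Ds. \<exists>f. f ` (Ds ! i) \<subseteq> T \<and> inj_on f (Ds ! i)"
    using assms(2,3) by (auto intro!: card_le_inj)
  then obtain f where f: "\<And>i. i < length Ds \<Longrightarrow> f i ` (Ds ! i) \<subseteq> T \<and> inj_on (f i) (Ds ! i)"
    by metis
  have "inj_on (\<lambda>a. f (idx a) a) D \<and> (\<lambda>a. f (idx a) a) ` D \<subseteq> T" if "D \<in> set Ds" for D
  proof -
    obtain i where i: "i < length Ds" "D = Ds ! i" using \<open>D \<in> set Ds\<close> by (auto simp: in_set_conv_nth)
    have "inj_on (\<lambda>a. f (idx a) a) D \<longleftrightarrow> inj_on (f i) D" "(\<lambda>a. f (idx a) a) ` D = f i ` D"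
      using idx[OF i(1)] i(2) by (auto intro!: inj_on_cong image_cong)
    then show ?thesis using f[OF i(1)] i(2) by simp
  qed
  then show ?thesis by blast
qed

theorem has_PDF_lift_addF:
  assumes G: "group G" "finite (carrier G)" and base: "is_PDF G v ks lam Ds" "2 * lam = v"
    and fields: "is_field_family m Fld" and odd_m: "odd m"
    and large: "\<forall>q \<in> components m. \<forall>k \<in> set ks. 2 * k < q"
  shows "has_PDF (G \<times>\<times> addF m Fld) (v * m) (v # concat (map (\<lambda>k. replicate (m div 2) (2 * k)) ks)) v"
proof -
  define I where "I = components m"
  have m: "m \<noteq> 0" using odd_m by (rule odd_pos[THEN gr_implies_not0])
  have fld: "field (Fld q)" "card (carrier (Fld q)) = q" "finite (carrier (Fld q))" if "q \<in> I" for q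
    using fields that unfolding is_field_family_def I_def by auto
  have dom: "domain (Fld q)" if "q \<in> I" for q
    using fld(1)[OF that] field.axioms(1) by blast
  have add_group: "group (add_monoid (Fld q))" if "q \<in> I" for q
    by (rule abelian_group.a_group[OF ring.is_abelian_group[OF field.is_ring[OF fld(1)[OF that]]]])
  have blocks: "\<forall>i < length Ds. \<forall>j < length Ds. i \<noteq> j \<longrightarrow> Ds ! i \<inter> Ds ! j = {}"
    "\<Union> (set Ds) = carrier G" "mset (map card Ds) = mset ks"
    using base(1) unfolding is_PDF_def by simp_all
  have "\<forall>q \<in> I. \<exists>T. inverse_transversal (add_monoid (Fld q)) T \<and> card T = q div 2"
  proof
    fix q assume q: "q \<in> I"
    interpret F: group "add_monoid (Fld q)" by (rule add_group[OF q])
    have "odd q" using components_dvd odd_m q unfolding I_def by (metis dvd_trans)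
    then have "odd (order (add_monoid (Fld q)))" using fld(2)[OF q] by (simp add: order_def)
    then obtain T where T: "inverse_transversal (add_monoid (Fld q)) T"
      using F.exists_inverse_transversal by blast
    moreover have "finite (carrier (add_monoid (Fld q)))" using fld(3)[OF q] by simp
    ultimately have "2 * card T + 1 = q"
      using F.card_inverse_transversal fld(2)[OF q] by (simp add: order_def)
    then show "\<exists>T. inverse_transversal (add_monoid (Fld q)) T \<and> card T = q div 2"
      using T by auto
  qed
  from bchoice[OF this] obtain T
    where "\<forall>q \<in> I. inverse_transversal (add_monoid (Fld q)) (T q) \<and> card (T q) = q div 2"
    by (rule exE)
  then have T: "\<And>q. q \<in> I \<Longrightarrow> inverse_transversal (add_monoid (Fld q)) (T q)"
    and card_T: "\<And>q. q \<in> I \<Longrightarrow> card (T q) = q div 2"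
    by blast+
  have "\<forall>q \<in> I. \<exists>w. \<forall>D \<in> set Ds. inj_on w D \<and> w ` D \<subseteq> T q"
  proof (intro ballI ex_inj_on_blocks[OF blocks(1)])
    fix q assume q: "q \<in> I"
    show "finite (T q)"
      using T[OF q] fld(3)[OF q] finite_subset unfolding inverse_transversal_def by fastforce
    fix D assume D: "D \<in> set Ds"
    then have "D \<subseteq> carrier G" using blocks(2) by blast
    then have "finite D" using G(2) finite_subset by blast
    moreover have "card D \<in> set ks" using mset_eq_setD[OF blocks(3)] D by auto
    moreover have "2 * card D < q" using large q calculation(2) unfolding I_def by blast
    ultimately show "finite D \<and> card D \<le> card (T q)"
      using card_T[OF q] by presburger
  qed
  from bchoice[OF this] obtain u where "\<forall>q \<in> I. \<forall>D \<in> set Ds. inj_on (u q) D \<and> u q ` D \<subseteq> T q"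
    by (rule exE)
  then have u: "\<And>q D. q \<in> I \<Longrightarrow> D \<in> set Ds \<Longrightarrow> inj_on (u q) D \<and> u q ` D \<subseteq> T q"
    by blast
  have u_T: "u q a \<in> T q" if "q \<in> I" "D \<in> set Ds" "a \<in> D" for q D a
    using u[OF that(1,2)] that(3) by blast
  have u_nonzero: "u q a \<in> carrier (Fld q) \<and> u q a \<noteq> \<zero>\<^bsub>Fld q\<^esub>" if q: "q \<in> I" and a: "a \<in> carrier G" for q a
  proof -
    obtain D where "D \<in> set Ds" "a \<in> D" using a blocks(2) by blast
    then have "u q a \<in> T q" using u_T[OF q] by blast
    moreover have "T q \<subseteq> carrier (add_monoid (Fld q)) - {\<one>\<^bsub>add_monoid (Fld q)\<^esub>}"
      using T[OF q] unfolding inverse_transversal_def by blast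
    ultimately show ?thesis by auto
  qed
  define mul where "mul a = (\<lambda>z. \<lambda>q\<in>I. u q a \<otimes>\<^bsub>Fld q\<^esub> z q)" for a
  have A: "addF m Fld = product_group I (\<lambda>q. add_monoid (Fld q))"
    unfolding addF_def I_def ..
  have "has_PDF (G \<times>\<times> addF m Fld) (v * order (addF m Fld))
      (v # concat (map (\<lambda>k. replicate (order (addF m Fld) div 2) (2 * k)) ks)) v"
  proof (rule has_PDF_lift[OF G comm_group_addF[OF fields] _ base])
    show "odd (order (addF m Fld))" using order_addF[OF m fields] odd_m by simp
    show "mul a \<in> hom (addF m Fld) (addF m Fld)" if "a \<in> carrier G" for a
      unfolding A mul_def using dom u_nonzero[OF _ that] by (intro scale_hom) auto
    show "inj_on (mul a) (carrier (addF m Fld))" if "a \<in> carrier G" for a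
      unfolding A mul_def using dom u_nonzero[OF _ that] by (intro scale_inj) auto
  next
    fix D a a' z assume D: "D \<in> set Ds" "a \<in> D" "a' \<in> D" "a \<noteq> a'"
      and z: "z \<in> carrier (addF m Fld)" "mul a z = mul a' z"
    have "a \<in> carrier G" "a' \<in> carrier G" using D blocks(2) by blast+
    then have u_a: "\<And>q. q \<in> I \<Longrightarrow> u q a \<in> carrier (Fld q)" "\<And>q. q \<in> I \<Longrightarrow> u q a' \<in> carrier (Fld q)"
      using u_nonzero by blast+
    have "u q a \<noteq> u q a'" if "q \<in> I" for q
      using inj_on_contraD[of "u q" D a a'] u[OF that D(1)] D(2-4) by blast
    from scale_eq_imp_one[of I Fld "\<lambda>q. u q a" "\<lambda>q. u q a'", OF dom u_a this z(1)[unfolded A]]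
    show "z = \<one>\<^bsub>addF m Fld\<^esub>"
      using z(2) unfolding A mul_def by simp
  next
    fix D a a' z assume D: "D \<in> set Ds" "a \<in> D" "a' \<in> D"
      and z: "z \<in> carrier (addF m Fld)" "mul a z \<otimes>\<^bsub>addF m Fld\<^esub> mul a' z = \<one>\<^bsub>addF m Fld\<^esub>"
    have "a \<in> carrier G" "a' \<in> carrier G" using D blocks(2) by blast+
    then have u_a: "\<And>q. q \<in> I \<Longrightarrow> u q a \<in> carrier (Fld q)" "\<And>q. q \<in> I \<Longrightarrow> u q a' \<in> carrier (Fld q)"
      using u_nonzero by blast+
    have "u q a \<oplus>\<^bsub>Fld q\<^esub> u q a' \<noteq> \<zero>\<^bsub>Fld q\<^esub>" if q: "q \<in> I" for q
    proof
      assume "u q a \<oplus>\<^bsub>Fld q\<^esub> u q a' = \<zero>\<^bsub>Fld q\<^esub>"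
      then have "u q a \<otimes>\<^bsub>add_monoid (Fld q)\<^esub> u q a' = \<one>\<^bsub>add_monoid (Fld q)\<^esub>" by simp
      then have "inv\<^bsub>add_monoid (Fld q)\<^esub> (u q a') = u q a"
        by (rule group.inv_equality[OF add_group[OF q]]) (simp_all add: u_a q)
      moreover have "inv\<^bsub>add_monoid (Fld q)\<^esub> (u q a') \<notin> T q"
        using T[OF q] u_T[OF q D(1,3)] unfolding inverse_transversal_def by blast
      ultimately show False using u_T[OF q D(1,2)] by simp
    qed
    from scale_mult_eq_one_imp_one[of I Fld "\<lambda>q. u q a" "\<lambda>q. u q a'", OF dom u_a this z(1)[unfolded A]]
    show "z = \<one>\<^bsub>addF m Fld\<^esub>"
      using z(2) unfolding A mul_def by simp
  qed
  then show ?thesis using order_addF[OF m fields] by simp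
qed

lemma (in group) is_PDF_enumerated:
  fixes enc :: "'c \<Rightarrow> 'a" and mulc :: "'c \<Rightarrow> 'c \<Rightarrow> 'c" and Dls :: "'c list list"
  assumes carrier: "carrier G = enc ` set (concat Dls)" and inj: "inj_on enc (set (concat Dls))"
    and distinct: "distinct (concat Dls)" and nonempty: "[] \<notin> set Dls"
    and mult: "\<forall>s \<in> set (concat Dls). \<forall>t \<in> set (concat Dls).
      enc s \<otimes> enc t = enc (mulc s t) \<and> mulc s t \<in> set (concat Dls)"
    and one: "e \<in> set (concat Dls)" "enc e = \<one>"
    and sizes: "mset (map length Dls) = mset ks"
    and counts: "\<forall>s \<in> set (concat Dls). s \<noteq> e \<longrightarrow>
      (\<Sum>D\<leftarrow>Dls. length (filter (\<lambda>t. mulc s t \<in> set D) D)) = lam"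
  shows "is_PDF G (length (concat Dls)) ks lam (map (\<lambda>D. enc ` set D) Dls)"
proof -
  have D_sub: "set D \<subseteq> set (concat Dls)" if "D \<in> set Dls" for D
    using that by auto
  have D_distinct: "distinct D" if "D \<in> set Dls" for D
    using distinct that by (simp add: distinct_concat_iff)
  have Dls_distinct: "distinct Dls"
    using distinct nonempty by (simp add: distinct_concat_iff distinct_removeAll)
  have card_D: "card (enc ` set D) = length D" if "D \<in> set Dls" for D
    using inj_on_subset[OF inj D_sub[OF that]] D_distinct[OF that] by (simp add: card_image distinct_card)
  have diff_D: "diff_count G (enc ` set D) (enc s) = length (filter (\<lambda>t. mulc s t \<in> set D) D)"
    if D: "D \<in> set Dls" and s: "s \<in> set (concat Dls)" "s \<noteq> e" for D s
  proof -
    have "enc s \<noteq> \<one>" using inj s one unfolding inj_on_def by metis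
    then have "diff_count G (enc ` set D) (enc s) = card {y \<in> enc ` set D. enc s \<otimes> y \<in> enc ` set D}"
      using D_sub[OF D] s(1) carrier by (intro diff_count_eq) auto
    also have "{y \<in> enc ` set D. enc s \<otimes> y \<in> enc ` set D} = enc ` {t \<in> set D. mulc s t \<in> set D}"
    proof -
      have "enc s \<otimes> enc t \<in> enc ` set D \<longleftrightarrow> mulc s t \<in> set D" if "t \<in> set D" for t
      proof -
        have "mulc s t \<in> set (concat Dls)" "enc s \<otimes> enc t = enc (mulc s t)"
          using mult[rule_format, OF s(1)] D_sub[OF D] that by blast+
        then show ?thesis using inj_on_image_mem_iff[OF inj _ D_sub[OF D]] by simp
      qed
      then show ?thesis by auto
    qed
    also have "card \<dots> = length (filter (\<lambda>t. mulc s t \<in> set D) D)"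
      using inj_on_subset[OF inj D_sub[OF D]] D_distinct[OF D]
      by (subst card_image) (auto intro: inj_on_subset simp: distinct_length_filter Int_def conj_commute)
    finally show ?thesis .
  qed
  show ?thesis
    unfolding is_PDF_diff_count_def
  proof (intro conjI allI impI ballI)
    show "card (carrier G) = length (concat Dls)"
      unfolding carrier card_image[OF inj] using distinct_card[OF distinct] .
    show "\<Union> (set (map (\<lambda>D. enc ` set D) Dls)) = carrier G"
      using carrier by auto
    show "mset (map card (map (\<lambda>D. enc ` set D) Dls)) = mset ks"
      using sizes card_D by (simp add: comp_def cong: map_cong)
  next
    fix B assume "B \<in> set (map (\<lambda>D. enc ` set D) Dls)"
    then obtain D where D: "D \<in> set Dls" "B = enc ` set D" by auto
    then show "B \<subseteq> carrier G" using carrier by auto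
    show "B \<noteq> {}" using D nonempty by auto
  next
    fix i j assume ij: "i < length (map (\<lambda>D. enc ` set D) Dls)" "j < length (map (\<lambda>D. enc ` set D) Dls)" "i \<noteq> j"
    then have "Dls ! i \<noteq> Dls ! j" using Dls_distinct by (simp add: nth_eq_iff_index_eq)
    then have "set (Dls ! i) \<inter> set (Dls ! j) = {}"
      using distinct ij by (simp add: distinct_concat_iff)
    moreover have "set (Dls ! i) \<union> set (Dls ! j) \<subseteq> set (concat Dls)"
      using ij D_sub nth_mem by simp
    ultimately show "map (\<lambda>D. enc ` set D) Dls ! i \<inter> map (\<lambda>D. enc ` set D) Dls ! j = {}"
      using ij inj by (auto dest: inj_onD)
  next
    fix g assume g: "g \<in> carrier G" "g \<noteq> \<one>"
    then obtain s where s: "s \<in> set (concat Dls)" "g = enc s" using carrier by auto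
    then have "s \<noteq> e" using g one by auto
    then have "map (\<lambda>B. diff_count G B g) (map (\<lambda>D. enc ` set D) Dls)
        = map (\<lambda>D. length (filter (\<lambda>t. mulc s t \<in> set D) D)) Dls"
      using diff_D s by simp
    then have "(\<Sum>B\<leftarrow>map (\<lambda>D. enc ` set D) Dls. diff_count G B g)
        = (\<Sum>D\<leftarrow>Dls. length (filter (\<lambda>t. mulc s t \<in> set D) D))"
      by (rule arg_cong)
    also have "\<dots> = lam" using counts s(1) \<open>s \<noteq> e\<close> by blast
    finally show "(\<Sum>B\<leftarrow>map (\<lambda>D. enc ` set D) Dls. diff_count G B g) = lam" .
  qed
qed

lemma C3_rtimes_C8_mult:
  "(i, j) \<otimes>\<^bsub>C3_rtimes_C8\<^esub> (k, l) = ((i + k) mod 8, (if even k then j + l else 2 * j + l) mod 3)"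
  by (simp add: C3_rtimes_C8_def)

lemma mod3_double: "(2 * (x mod 3) + q) mod 3 = (2 * x + q) mod (3::nat)"
  by (metis mod_add_left_eq mod_mult_right_eq)

lemma C3_rtimes_C8_assoc:
  "x \<otimes>\<^bsub>C3_rtimes_C8\<^esub> y \<otimes>\<^bsub>C3_rtimes_C8\<^esub> z = x \<otimes>\<^bsub>C3_rtimes_C8\<^esub> (y \<otimes>\<^bsub>C3_rtimes_C8\<^esub> z)"
proof -
  obtain i j k l p q where xyz: "x = (i, j)" "y = (k, l)" "z = (p, q)" by (metis prod.exhaust)
  have ev: "even ((k + p) mod 8) = even (k + p)" by presburger
  have "((i + k) mod 8 + p) mod 8 = (i + (k + p) mod 8) mod 8" by (simp add: mod_simps add.assoc)
  moreover have "(if even p then (if even k then j + l else 2 * j + l) mod 3 + q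
        else 2 * ((if even k then j + l else 2 * j + l) mod 3) + q) mod 3
      = (if even ((k + p) mod 8) then j + (if even p then l + q else 2 * l + q) mod 3
        else 2 * j + (if even p then l + q else 2 * l + q) mod 3) mod 3"
  proof (cases "even k"; cases "even p")
    assume "even k" "even p"
    then show ?thesis using ev by (simp add: mod_simps add.assoc)
  next
    assume "even k" "odd p"
    then show ?thesis using ev by (simp add: mod3_double mod_simps add.assoc distrib_left)
  next
    assume "odd k" "even p"
    then show ?thesis using ev by (simp add: mod_simps add.assoc)
  next
    assume "odd k" "odd p"
    then have "even ((k + p) mod 8)" using ev by simp
    have "(2 * ((2 * j + l) mod 3) + q) mod 3 = (2 * (2 * j + l) + q) mod 3"
      by (rule mod3_double)
    also have "2 * (2 * j + l) + q = 3 * j + (j + (2 * l + q))" by presburger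
    finally have "(2 * ((2 * j + l) mod 3) + q) mod 3 = (3 * j + (j + (2 * l + q))) mod 3" .
    also have "\<dots> = (j + (2 * l + q)) mod 3" by presburger
    finally show ?thesis using \<open>odd k\<close> \<open>odd p\<close> \<open>even ((k + p) mod 8)\<close> by (simp add: mod_simps)
  qed
  ultimately show ?thesis unfolding xyz by (simp add: C3_rtimes_C8_mult)
qed

lemma group_C3_rtimes_C8: "group C3_rtimes_C8"
proof (rule groupI)
  show "x \<otimes>\<^bsub>C3_rtimes_C8\<^esub> y \<in> carrier C3_rtimes_C8"
    if "x \<in> carrier C3_rtimes_C8" "y \<in> carrier C3_rtimes_C8" for x y
    using that by (auto simp: C3_rtimes_C8_def split: prod.splits)
  show "\<one>\<^bsub>C3_rtimes_C8\<^esub> \<in> carrier C3_rtimes_C8" by (simp add: C3_rtimes_C8_def)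
  show "x \<otimes>\<^bsub>C3_rtimes_C8\<^esub> y \<otimes>\<^bsub>C3_rtimes_C8\<^esub> z = x \<otimes>\<^bsub>C3_rtimes_C8\<^esub> (y \<otimes>\<^bsub>C3_rtimes_C8\<^esub> z)" for x y z
    by (rule C3_rtimes_C8_assoc)
  show "\<one>\<^bsub>C3_rtimes_C8\<^esub> \<otimes>\<^bsub>C3_rtimes_C8\<^esub> x = x" if "x \<in> carrier C3_rtimes_C8" for x
    using that by (auto simp: C3_rtimes_C8_def)
  show "\<exists>y \<in> carrier C3_rtimes_C8. y \<otimes>\<^bsub>C3_rtimes_C8\<^esub> x = \<one>\<^bsub>C3_rtimes_C8\<^esub>"
    if xc: "x \<in> carrier C3_rtimes_C8" for x
  proof -
    obtain i j where x: "x = (i, j)" "i < 8" "j < 3" using xc by (cases x) (auto simp: C3_rtimes_C8_def)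
    \<comment> \<open>\<open>(a\<^sup>i b\<^sup>j)\<inverse> = b\<^sup>-\<^sup>j a\<^sup>-\<^sup>i\<close>, written in normal form\<close>
    define y where "y = ((8 - i) mod 8, if even i then (3 - j) mod 3 else j)"
    have "y \<in> carrier C3_rtimes_C8" using x unfolding y_def C3_rtimes_C8_def by auto
    moreover have "y \<otimes>\<^bsub>C3_rtimes_C8\<^esub> x = \<one>\<^bsub>C3_rtimes_C8\<^esub>"
      using x unfolding y_def C3_rtimes_C8_def by (auto simp: mod_simps)
    ultimately show ?thesis by blast
  qed
qed

definition C3_rtimes_C8_blocks :: "(nat \<times> nat) list list" where
  "C3_rtimes_C8_blocks =
    [[(0, 2), (1, 1), (1, 2), (2, 0), (2, 1), (3, 1), (3, 2), (4, 0), (4, 1), (4, 2), (5, 0), (5, 2),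
      (6, 0), (6, 1), (6, 2), (7, 1), (7, 2)],
     [(1, 0), (5, 1)], [(0, 0), (0, 1)], [(7, 0)], [(2, 2)], [(3, 0)]]"

lemma has_PDF_C3_rtimes_C8: "has_PDF C3_rtimes_C8 24 [17, 2, 2, 1, 1, 1] 12"
proof -
  have "is_PDF C3_rtimes_C8 (length (concat C3_rtimes_C8_blocks)) [17, 2, 2, 1, 1, 1] 12
    (map (\<lambda>D. id ` set D) C3_rtimes_C8_blocks)"
  proof (rule group.is_PDF_enumerated[OF group_C3_rtimes_C8, where enc = id and e = "(0, 0)"
        and mulc = "mult C3_rtimes_C8"])
    show "inj_on id (set (concat C3_rtimes_C8_blocks))" by simp
  qed (unfold image_id id_apply C3_rtimes_C8_def C3_rtimes_C8_blocks_def, code_simp+)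
  moreover have "length (concat C3_rtimes_C8_blocks) = 24" by (simp add: C3_rtimes_C8_blocks_def)
  ultimately show ?thesis unfolding has_PDF_def by metis
qed

lemma group_by_enumeration:
  assumes "carrier G = set L"
    and "\<forall>x \<in> set L. \<forall>y \<in> set L. x \<otimes>\<^bsub>G\<^esub> y \<in> set L"
    and "\<forall>x \<in> set L. \<forall>y \<in> set L. \<forall>z \<in> set L. x \<otimes>\<^bsub>G\<^esub> y \<otimes>\<^bsub>G\<^esub> z = x \<otimes>\<^bsub>G\<^esub> (y \<otimes>\<^bsub>G\<^esub> z)"
    and "\<one>\<^bsub>G\<^esub> \<in> set L" "\<forall>x \<in> set L. \<one>\<^bsub>G\<^esub> \<otimes>\<^bsub>G\<^esub> x = x"
    and "\<forall>x \<in> set L. \<exists>y \<in> set L. y \<otimes>\<^bsub>G\<^esub> x = \<one>\<^bsub>G\<^esub>"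
  shows "group G"
  using assms by (intro groupI) auto

lemma group_D8: "group D8"
  by (rule group_by_enumeration[where L = "List.product [0..<4] [0..<2]"])
    (unfold D8_def, code_simp+)

definition Z3_times_D8_blocks :: "(int \<times> nat \<times> nat) list list" where
  "Z3_times_D8_blocks =
    [[(0, 0, 0), (0, 0, 1), (0, 1, 0), (0, 3, 0), (1, 0, 1), (1, 1, 0), (1, 1, 1), (1, 2, 0), (1, 3, 0),
      (1, 3, 1), (2, 0, 0), (2, 0, 1), (2, 1, 0), (2, 2, 0), (2, 2, 1), (2, 3, 0), (2, 3, 1)],
     [(0, 2, 1), (1, 0, 0)], [(0, 2, 0), (1, 2, 1)], [(2, 1, 1)], [(0, 1, 1)], [(0, 3, 1)]]"

lemma has_PDF_Z3_times_D8: "has_PDF Z3_times_D8 24 [17, 2, 2, 1, 1, 1] 12"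
proof -
  have "is_PDF Z3_times_D8 (length (concat Z3_times_D8_blocks)) [17, 2, 2, 1, 1, 1] 12
    (map (\<lambda>D. id ` set D) Z3_times_D8_blocks)"
  proof (rule group.is_PDF_enumerated[where enc = id and e = "(0, 0, 0)" and mulc = "mult Z3_times_D8"])
    show "group Z3_times_D8"
      unfolding Z3_times_D8_def by (rule DirProd_group[OF group_integer_mod_group group_D8])
    show "inj_on id (set (concat Z3_times_D8_blocks))" by simp
  qed (unfold image_id id_apply Z3_times_D8_def D8_def integer_mod_group_def DirProd_def
      Z3_times_D8_blocks_def, code_simp+)
  moreover have "length (concat Z3_times_D8_blocks) = 24" by (simp add: Z3_times_D8_blocks_def)
  ultimately show ?thesis unfolding has_PDF_def by metis
qed

definition mat_of_tuple :: "nat \<times> nat \<times> nat \<times> nat \<Rightarrow> 3 ^ 2 ^ 2" where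
  "mat_of_tuple t = (case t of (a, b, c, d) \<Rightarrow>
     \<chi> i j. if i = 1 then (if j = 1 then of_nat a else of_nat b) else (if j = 1 then of_nat c else of_nat d))"

definition tuple_mult :: "nat \<times> nat \<times> nat \<times> nat \<Rightarrow> nat \<times> nat \<times> nat \<times> nat \<Rightarrow> nat \<times> nat \<times> nat \<times> nat" where
  "tuple_mult t s = (case t of (a, b, c, d) \<Rightarrow> case s of (e, f, g, h) \<Rightarrow>
     ((a * e + b * g) mod 3, (a * f + b * h) mod 3, (c * e + d * g) mod 3, (c * f + d * h) mod 3))"

lemma of_nat_mod_3: "(of_nat (x mod 3) :: 3) = of_nat x"
proof -
  have "(of_nat x :: 3) = of_nat (x mod 3 + 3 * (x div 3))" by simp
  also have "\<dots> = of_nat (x mod 3) + 3 * of_nat (x div 3)"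
    by (simp only: of_nat_add of_nat_mult of_nat_numeral)
  also have "(3 :: 3) = 0" by simp
  finally show ?thesis by simp
qed

lemma of_nat_eq_iff_mod_3: "(of_nat x :: 3) = of_nat y \<longleftrightarrow> x mod 3 = y mod 3"
proof
  assume "(of_nat x :: 3) = of_nat y"
  then have "(of_nat (x mod 3) :: 3) = of_nat (y mod 3)" by (simp add: of_nat_mod_3)
  moreover have "u = v" if "u < 3" "v < 3" "(of_nat u :: 3) = of_nat v" for u v :: nat
    using that by (auto simp: less_Suc_eq numeral_3_eq_3)
  ultimately show "x mod 3 = y mod 3" by simp
qed (metis of_nat_mod_3)

lemma mat_of_tuple_nth:
  "mat_of_tuple (a, b, c, d) $ 1 $ 1 = of_nat a" "mat_of_tuple (a, b, c, d) $ 1 $ 2 = of_nat b"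
  "mat_of_tuple (a, b, c, d) $ 2 $ 1 = of_nat c" "mat_of_tuple (a, b, c, d) $ 2 $ 2 = of_nat d"
  unfolding mat_of_tuple_def by simp_all

lemma mat_of_tuple_mult: "mat_of_tuple t ** mat_of_tuple s = mat_of_tuple (tuple_mult t s)"
proof -
  obtain a b c d e f g h where "t = (a, b, c, d)" "s = (e, f, g, h)" by (metis prod.exhaust)
  then show ?thesis unfolding tuple_mult_def
    by (simp add: vec_eq_iff forall_2 matrix_matrix_mult_def sum_2 mat_of_tuple_nth of_nat_mod_3)
qed

lemma mat_of_tuple_eq_iff:
  assumes "a < 3" "b < 3" "c < 3" "d < 3" "e < 3" "f < 3" "g < 3" "h < 3"
  shows "mat_of_tuple (a, b, c, d) = mat_of_tuple (e, f, g, h) \<longleftrightarrow> (a, b, c, d) = (e, f, g, h)"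
  using assms by (simp add: vec_eq_iff forall_2 mat_of_tuple_nth of_nat_eq_iff_mod_3)

lemma ex_of_nat_less_3: "\<exists>n < 3. (x :: 3) = of_nat n"
proof -
  have "x = 1 \<or> x = 2 \<or> x = 3" by (rule exhaust_3)
  then show ?thesis
  proof (elim disjE)
    assume "x = 1" then show ?thesis by (intro exI[of _ 1]) simp
  next
    assume "x = 2" then show ?thesis by (intro exI[of _ 2]) simp
  next
    assume "x = 3" then show ?thesis by (intro exI[of _ 0]) simp
  qed
qed

lemma obtain_mat_of_tuple:
  obtains a b c d where "a < 3" "b < 3" "c < 3" "d < 3" "A = mat_of_tuple (a, b, c, d)"
proof -
  obtain a b c d where "a < 3" "b < 3" "c < 3" "d < 3" "A $ 1 $ 1 = of_nat a" "A $ 1 $ 2 = of_nat b"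
    "A $ 2 $ 1 = of_nat c" "A $ 2 $ 2 = of_nat d" using ex_of_nat_less_3 by metis
  then show thesis using that[of a b c d] by (simp add: vec_eq_iff forall_2 mat_of_tuple_nth)
qed

lemma det_mat_of_tuple: "det (mat_of_tuple (a, b, c, d)) = 1 \<longleftrightarrow> a * d mod 3 = (1 + b * c) mod 3"
proof -
  have "det (mat_of_tuple (a, b, c, d)) = of_nat (a * d) - of_nat (b * c)"
    by (simp add: det_2 mat_of_tuple_nth)
  then have "det (mat_of_tuple (a, b, c, d)) = 1 \<longleftrightarrow> (of_nat (a * d) :: 3) = of_nat (1 + b * c)"
    by (auto simp: algebra_simps)
  then show ?thesis using of_nat_eq_iff_mod_3[of "a * d" "1 + b * c"] by simp
qed

definition SL23_blocks :: "(nat \<times> nat \<times> nat \<times> nat) list list" where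
  "SL23_blocks =
    [[(0, 1, 2, 0), (0, 1, 2, 1), (0, 2, 1, 0), (0, 2, 1, 1), (1, 0, 1, 1), (1, 1, 0, 1), (1, 1, 1, 2),
      (1, 1, 2, 0), (1, 2, 1, 0), (2, 0, 0, 2), (2, 0, 1, 2), (2, 0, 2, 2), (2, 1, 0, 2), (2, 1, 2, 0),
      (2, 2, 0, 2), (2, 2, 1, 0), (2, 2, 2, 1)],
     [(0, 1, 2, 2), (1, 0, 2, 1)], [(0, 2, 1, 2), (1, 2, 0, 1)], [(1, 0, 0, 1)], [(1, 2, 2, 2)],
     [(2, 1, 1, 1)]]"

lemma SL23_blocks_entries:
  "\<forall>(a, b, c, d) \<in> set (concat SL23_blocks). a < 3 \<and> b < 3 \<and> c < 3 \<and> d < 3"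
  unfolding SL23_blocks_def by code_simp

lemma carrier_SL23: "carrier SL23 = mat_of_tuple ` set (concat SL23_blocks)"
proof
  have complete: "\<forall>a \<in> set [0..<3]. \<forall>b \<in> set [0..<3]. \<forall>c \<in> set [0..<3]. \<forall>d \<in> set [0..<3].
      a * d mod 3 = (1 + b * c) mod 3 \<longrightarrow> (a, b, c, d) \<in> set (concat SL23_blocks)"
    unfolding SL23_blocks_def by code_simp
  show "carrier SL23 \<subseteq> mat_of_tuple ` set (concat SL23_blocks)"
  proof
    fix A assume "A \<in> carrier SL23"
    then have "det A = 1" by (simp add: SL23_def)
    obtain a b c d where abcd: "a < 3" "b < 3" "c < 3" "d < 3" and A: "A = mat_of_tuple (a, b, c, d)"
      by (rule obtain_mat_of_tuple)
    then have "a * d mod 3 = (1 + b * c) mod 3" using \<open>det A = 1\<close> det_mat_of_tuple by simp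
    then show "A \<in> mat_of_tuple ` set (concat SL23_blocks)"
      using complete[rule_format, of a b c d] abcd A by simp
  qed
  have "\<forall>(a, b, c, d) \<in> set (concat SL23_blocks). a * d mod 3 = (1 + b * c) mod 3"
    unfolding SL23_blocks_def by code_simp
  then show "mat_of_tuple ` set (concat SL23_blocks) \<subseteq> carrier SL23"
    by (force simp: SL23_def det_mat_of_tuple)
qed

lemma mat_of_tuple_one: "mat_of_tuple (1, 0, 0, 1) = mat 1"
  unfolding mat_of_tuple_def mat_def by (simp add: vec_eq_iff forall_2)

lemma group_SL23: "group SL23"
proof (rule groupI)
  show "x \<otimes>\<^bsub>SL23\<^esub> y \<in> carrier SL23" if "x \<in> carrier SL23" "y \<in> carrier SL23" for x y
    using that by (simp add: SL23_def det_mul)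
  show "\<one>\<^bsub>SL23\<^esub> \<in> carrier SL23" by (simp add: SL23_def det_I)
  show "x \<otimes>\<^bsub>SL23\<^esub> y \<otimes>\<^bsub>SL23\<^esub> z = x \<otimes>\<^bsub>SL23\<^esub> (y \<otimes>\<^bsub>SL23\<^esub> z)" for x y z
    by (simp add: SL23_def matrix_mul_assoc)
  show "\<one>\<^bsub>SL23\<^esub> \<otimes>\<^bsub>SL23\<^esub> x = x" for x
    by (simp add: SL23_def matrix_mul_lid)
  show "\<exists>y \<in> carrier SL23. y \<otimes>\<^bsub>SL23\<^esub> x = \<one>\<^bsub>SL23\<^esub>" if x: "x \<in> carrier SL23" for x
  proof -
    obtain t where t: "t \<in> set (concat SL23_blocks)" "x = mat_of_tuple t"
      using x unfolding carrier_SL23 by blast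
    have "\<forall>t \<in> set (concat SL23_blocks). \<exists>s \<in> set (concat SL23_blocks). tuple_mult s t = (1, 0, 0, 1)"
      unfolding SL23_blocks_def tuple_mult_def by code_simp
    then obtain s where s: "s \<in> set (concat SL23_blocks)" "tuple_mult s t = (1, 0, 0, 1)"
      using t(1) by blast
    have "mat_of_tuple s \<otimes>\<^bsub>SL23\<^esub> x = \<one>\<^bsub>SL23\<^esub>"
      using t(2) s(2) mat_of_tuple_one by (simp add: SL23_def mat_of_tuple_mult)
    moreover have "mat_of_tuple s \<in> carrier SL23" unfolding carrier_SL23 using s(1) by blast
    ultimately show ?thesis by blast
  qed
qed

lemma has_PDF_SL23: "has_PDF SL23 24 [17, 2, 2, 1, 1, 1] 12"
proof -
  have "is_PDF SL23 (length (concat SL23_blocks)) [17, 2, 2, 1, 1, 1] 12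
    (map (\<lambda>D. mat_of_tuple ` set D) SL23_blocks)"
  proof (rule group.is_PDF_enumerated[OF group_SL23 carrier_SL23, where e = "(1, 0, 0, 1)" and mulc = tuple_mult])
    show "inj_on mat_of_tuple (set (concat SL23_blocks))"
    proof (rule inj_onI)
      fix s t assume st: "s \<in> set (concat SL23_blocks)" "t \<in> set (concat SL23_blocks)"
        and eq: "mat_of_tuple s = mat_of_tuple t"
      obtain a b c d e f g h where "s = (a, b, c, d)" "t = (e, f, g, h)" by (metis prod.exhaust)
      then show "s = t" using st eq SL23_blocks_entries mat_of_tuple_eq_iff[of a b c d e f g h] by fastforce
    qed
    have "\<forall>s \<in> set (concat SL23_blocks). \<forall>t \<in> set (concat SL23_blocks). tuple_mult s t \<in> set (concat SL23_blocks)"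
      unfolding SL23_blocks_def tuple_mult_def by code_simp
    then show "\<forall>s \<in> set (concat SL23_blocks). \<forall>t \<in> set (concat SL23_blocks).
        mat_of_tuple s \<otimes>\<^bsub>SL23\<^esub> mat_of_tuple t = mat_of_tuple (tuple_mult s t) \<and> tuple_mult s t \<in> set (concat SL23_blocks)"
      by (simp add: SL23_def mat_of_tuple_mult)
    show "mat_of_tuple (1, 0, 0, 1) = \<one>\<^bsub>SL23\<^esub>" using mat_of_tuple_one by (simp add: SL23_def)
  qed (unfold SL23_blocks_def tuple_mult_def, code_simp+)
  moreover have "length (concat SL23_blocks) = 24" by (simp add: SL23_blocks_def)
  ultimately show ?thesis unfolding has_PDF_def by metis
qed

lemma mset_blocksizes:
  "mset (24 # concat (map (\<lambda>k. replicate n (2 * k)) [17, 2, 2, 1, 1, 1])) = mset (blocksizes n)"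
proof -
  have sizes: "concat (map (\<lambda>k. replicate n (2 * k)) [17, 2, 2, 1, 1, 1 :: nat])
      = replicate n 34 @ replicate n 4 @ replicate n 4 @ replicate n 2 @ replicate n 2 @ replicate n 2"
    by simp
  have fours: "replicate (2 * n) (4::nat) = replicate n 4 @ replicate n 4"
    by (simp only: mult_2 replicate_add)
  have "3 * n = n + (n + n)" by simp
  then have twos: "replicate (3 * n) (2::nat) = replicate n 2 @ replicate n 2 @ replicate n 2"
    by (simp only: replicate_add)
  show ?thesis unfolding blocksizes_def sizes fours twos by (simp add: ac_simps)
qed

lemma has_PDF_lift_24:
  assumes "group G" "has_PDF G 24 [17, 2, 2, 1, 1, 1] 12"
    and "\<forall>q \<in> components (2 * n + 1). q > 34" "is_field_family (2 * n + 1) Fld"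
  shows "has_PDF (G \<times>\<times> addF (2 * n + 1) Fld) (48 * n + 24) (blocksizes n) 24"
proof -
  obtain Ds where Ds: "is_PDF G 24 [17, 2, 2, 1, 1, 1] 12 Ds"
    using assms(2) unfolding has_PDF_def by blast
  then have "finite (carrier G)"
    unfolding is_PDF_def by (metis card.infinite zero_neq_numeral)
  then have lifted: "has_PDF (G \<times>\<times> addF (2 * n + 1) Fld) (24 * (2 * n + 1))
      (24 # concat (map (\<lambda>k. replicate ((2 * n + 1) div 2) (2 * k)) [17, 2, 2, 1, 1, 1])) 24"
    using assms(3) by (intro has_PDF_lift_addF[OF assms(1) _ Ds _ assms(4)]) auto
  have half: "(2 * n + 1) div 2 = n" and v: "24 * (2 * n + 1) = 48 * n + 24" by simp_all
  from lifted[unfolded half v] show ?thesis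
    by (rule has_PDF_mset_cong) (rule mset_blocksizes)
qed

theorem corollary7p2:
  fixes n :: nat and Fld :: "nat \<Rightarrow> 'b ring"
  assumes "n > 0"
    and "\<forall>q \<in> components (2 * n + 1). q > 34"
    and "is_field_family (2 * n + 1) Fld"
  shows "has_PDF (C3_rtimes_C8 \<times>\<times> addF (2 * n + 1) Fld) (48 * n + 24) (blocksizes n) 24
       \<and> has_PDF (SL23 \<times>\<times> addF (2 * n + 1) Fld) (48 * n + 24) (blocksizes n) 24
       \<and> has_PDF (Z3_times_D8 \<times>\<times> addF (2 * n + 1) Fld) (48 * n + 24) (blocksizes n) 24"
proof -
  have "group Z3_times_D8"
    unfolding Z3_times_D8_def by (rule DirProd_group[OF group_integer_mod_group group_D8])
  then show ?thesis
    using has_PDF_lift_24[OF group_C3_rtimes_C8 has_PDF_C3_rtimes_C8 assms(2,3)]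
      has_PDF_lift_24[OF group_SL23 has_PDF_SL23 assms(2,3)]
      has_PDF_lift_24[OF _ has_PDF_Z3_times_D8 assms(2,3)]
    by blast
qed

end
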